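(* Let $U\subseteq L_{\mathrm{up}}$ be a set of up-links such that the sets $P_u$, $u\in U$, are pairwise disjoint, and let $(C,A)$ be a (weakly) connected component of the dependency graph of $U$ (which is an arborescence). Let $\ell\in C$ and let $H_\ell$ be the arc set of the directed path in $(C,A)$ from the root of $(C,A)$ to $\ell$. Then $$\bigl|\{\bar\ell\in C\setminus\{\ell\}\colon \mathrm{apex}(\ell)\in V_{\bar\ell}\}\bigr|\ \le\ \bigl|\{u\in U\colon H_\ell\cap A_u\neq\emptyset\}\bigr|.$$
   Context: Let $(G=(V,E),L,w)$ be a WTAP instance (spanning tree $G$, links $L\subseteq\binom V2$, weights $w>0$) with a fixed root $r\in V$, and let $F\subseteq L$ be a WTAP solution, i.e. $\bigcup_{\ell\in F}P_\ell=E$, where $P_\ell$ is the edge set of the tree path between the endpoints of $\ell$ and $V_\ell$ its vertex set. Ancestors of $v$ are the vertices on the $r$-$v$ path in $G$ (including $r$ and $v$); descendants are defined reciprocally. $\mathrm{apex}(\ell)$ is the vertex of $V_\ell$ closest to $r$. An up-link is a link $\{t,b\}$ with $t$ an ancestor of $b$; $L_{\mathrm{up}}$ is the set of up-links. For $v\in V$ let $B_v=\{\ell\in F\colon\mathrm{apex}(\ell)\text{ is a descendant of }v\}$. For an up-link $u=\{t,b\}$ with $t$ an ancestor of $b$, let $v_u$ be the ancestor of $t$ farthest from $r$ such that $P_u\subseteq\bigcup_{\ell\in B_{v_u}}P_\ell$, and fix $F_u\subseteq B_{v_u}$ inclusion-wise minimal with $P_u\subseteq\bigcup_{\ell\in F_u}P_\ell$.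 For $\ell\in F_u$ let $P_{u,\ell}=P_u\setminus\bigcup_{\bar\ell\in F_u\setminus\{\ell\}}P_{\bar\ell}$; these sets are nonempty, pairwise disjoint, and each is the edge set of a path. Define $\ell_1\prec_u\ell_2$ iff the edges of $P_{u,\ell_1}$ appear before those of $P_{u,\ell_2}$ on the $t$-$b$ path in $G$. If $\ell_1\prec_u\cdots\prec_u\ell_q$ are the links of $F_u$, let $A_u=\{(\ell_i,\ell_{i+1})\colon i=1,\dots,q-1\}$. The dependency graph of $U\subseteq L_{\mathrm{up}}$ is the directed graph with vertex set $F$ whose arc set is the disjoint union of the $A_u$, $u\in U$. When the $P_u$, $u\in U$, are pairwise disjoint, this graph is a branching (no directed cycles, in-degrees at most one), so each weakly connected component is an arborescence. *)

theory Defs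
  imports Complex_Main
begin

(* Graphs: vertices of type 'v, edges and links are 2-element vertex sets. *)

definition is_path :: "'v set set \<Rightarrow> 'v list \<Rightarrow> bool" where
  "is_path E xs \<longleftrightarrow> xs \<noteq> [] \<and> distinct xs \<and>
     (\<forall>i. Suc i < length xs \<longrightarrow> {xs ! i, xs ! Suc i} \<in> E)"

definition is_tree :: "'v set \<Rightarrow> 'v set set \<Rightarrow> bool" where
  "is_tree V E \<longleftrightarrow> finite V \<and> V \<noteq> {} \<and>
     E \<subseteq> {{a, b} | a b. a \<in> V \<and> b \<in> V \<and> a \<noteq> b} \<and>
     (\<forall>a\<in>V. \<forall>b\<in>V. \<exists>!xs. is_path E xs \<and> hd xs = a \<and> last xs = b)"

definition tree_path :: "'v set set \<Rightarrow> 'v \<Rightarrow> 'v \<Rightarrow> 'v list" where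
  "tree_path E a b = (THE xs. is_path E xs \<and> hd xs = a \<and> last xs = b)"

definition path_edges :: "'v list \<Rightarrow> 'v set set" where
  "path_edges xs = {{xs ! i, xs ! Suc i} | i. Suc i < length xs}"

definition Pl :: "'v set set \<Rightarrow> 'v set \<Rightarrow> 'v set set" where
  "Pl E l = (\<Union>a\<in>l. \<Union>b\<in>l - {a}. path_edges (tree_path E a b))"

definition Vl :: "'v set set \<Rightarrow> 'v set \<Rightarrow> 'v set" where
  "Vl E l = (\<Union>a\<in>l. \<Union>b\<in>l - {a}. set (tree_path E a b))"

definition ancestor :: "'v set set \<Rightarrow> 'v \<Rightarrow> 'v \<Rightarrow> 'v \<Rightarrow> bool" where
  "ancestor E r x v \<longleftrightarrow> x \<in> set (tree_path E r v)"

definition depth :: "'v set set \<Rightarrow> 'v \<Rightarrow> 'v \<Rightarrow> nat" where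
  "depth E r x = length (tree_path E r x)"

definition apex :: "'v set set \<Rightarrow> 'v \<Rightarrow> 'v set \<Rightarrow> 'v" where
  "apex E r l = (ARG_MIN (depth E r) x. x \<in> Vl E l)"

definition is_up_link :: "'v set set \<Rightarrow> 'v \<Rightarrow> 'v set \<Rightarrow> bool" where
  "is_up_link E r u \<longleftrightarrow> (\<exists>t b. u = {t, b} \<and> t \<noteq> b \<and> ancestor E r t b)"

definition L_up :: "'v set set \<Rightarrow> 'v \<Rightarrow> 'v set set \<Rightarrow> 'v set set" where
  "L_up E r L = {u \<in> L. is_up_link E r u}"

definition up_top :: "'v set set \<Rightarrow> 'v \<Rightarrow> 'v set \<Rightarrow> 'v" where
  "up_top E r u = (THE t. \<exists>b. u = {t, b} \<and> t \<noteq> b \<and> ancestor E r t b)"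

definition up_bot :: "'v set set \<Rightarrow> 'v \<Rightarrow> 'v set \<Rightarrow> 'v" where
  "up_bot E r u = (THE b. \<exists>t. u = {t, b} \<and> t \<noteq> b \<and> ancestor E r t b)"

definition Bset :: "'v set set \<Rightarrow> 'v \<Rightarrow> 'v set set \<Rightarrow> 'v \<Rightarrow> 'v set set" where
  "Bset E r F v = {l \<in> F. ancestor E r v (apex E r l)}"

definition v_of :: "'v set set \<Rightarrow> 'v \<Rightarrow> 'v set set \<Rightarrow> 'v set \<Rightarrow> 'v" where
  "v_of E r F u = (ARG_MAX (depth E r) v.
      ancestor E r v (up_top E r u) \<and> Pl E u \<subseteq> (\<Union>l\<in>Bset E r F v. Pl E l))"

definition Fu_ok :: "'v set set \<Rightarrow> 'v \<Rightarrow> 'v set set \<Rightarrow> 'v set \<Rightarrow> 'v set set \<Rightarrow> bool" where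
  "Fu_ok E r F u S \<longleftrightarrow> S \<subseteq> Bset E r F (v_of E r F u) \<and>
     Pl E u \<subseteq> (\<Union>l\<in>S. Pl E l) \<and>
     (\<forall>S'. S' \<subset> S \<longrightarrow> \<not> Pl E u \<subseteq> (\<Union>l\<in>S'. Pl E l))"

definition Pul :: "'v set set \<Rightarrow> 'v set \<Rightarrow> 'v set set \<Rightarrow> 'v set \<Rightarrow> 'v set set" where
  "Pul E u S l = Pl E u - (\<Union>l'\<in>S - {l}. Pl E l')"

definition prec_u :: "'v set set \<Rightarrow> 'v \<Rightarrow> 'v set \<Rightarrow> 'v set set \<Rightarrow> 'v set \<Rightarrow> 'v set \<Rightarrow> bool" where
  "prec_u E r u S l1 l2 \<longleftrightarrow>
     (let xs = tree_path E (up_top E r u) (up_bot E r u) in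
      \<forall>i j. Suc i < length xs \<and> Suc j < length xs \<and>
            {xs ! i, xs ! Suc i} \<in> Pul E u S l1 \<and> {xs ! j, xs ! Suc j} \<in> Pul E u S l2
            \<longrightarrow> i < j)"

definition A_u :: "'v set set \<Rightarrow> 'v \<Rightarrow> 'v set \<Rightarrow> 'v set set \<Rightarrow> ('v set \<times> 'v set) set" where
  "A_u E r u S = {(l1, l2). l1 \<in> S \<and> l2 \<in> S \<and> l1 \<noteq> l2 \<and> prec_u E r u S l1 l2 \<and>
       \<not> (\<exists>l3\<in>S. l3 \<noteq> l1 \<and> l3 \<noteq> l2 \<and> prec_u E r u S l1 l3 \<and> prec_u E r u S l3 l2)}"

(* arcs of the dependency graph of U (vertex set F): disjoint union of the A_u,
   realised by tagging each arc with its up-link u: (u, l1, l2) *)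
definition dep_arcs :: "'v set set \<Rightarrow> 'v \<Rightarrow> ('v set \<Rightarrow> 'v set set) \<Rightarrow> 'v set set
     \<Rightarrow> ('v set \<times> 'v set \<times> 'v set) set" where
  "dep_arcs E r Fu U = {(u, l1, l2) | u l1 l2. u \<in> U \<and> (l1, l2) \<in> A_u E r u (Fu u)}"

definition arc_tail :: "'a \<times> 'b \<times> 'b \<Rightarrow> 'b" where "arc_tail a = fst (snd a)"
definition arc_head :: "'a \<times> 'b \<times> 'b \<Rightarrow> 'b" where "arc_head a = snd (snd a)"

definition weak_component :: "'b set \<Rightarrow> ('a \<times> 'b \<times> 'b) set \<Rightarrow> 'b set \<Rightarrow> bool" where
  "weak_component F Arcs C \<longleftrightarrow> (\<exists>x\<in>F. C = {y. (x, y) \<in>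
      ({(arc_tail a, arc_head a) | a. a \<in> Arcs} \<union> {(arc_head a, arc_tail a) | a. a \<in> Arcs})\<^sup>*})"

definition comp_arcs :: "('a \<times> 'b \<times> 'b) set \<Rightarrow> 'b set \<Rightarrow> ('a \<times> 'b \<times> 'b) set" where
  "comp_arcs Arcs C = {a \<in> Arcs. arc_tail a \<in> C \<and> arc_head a \<in> C}"

definition is_root :: "'b set \<Rightarrow> ('a \<times> 'b \<times> 'b) set \<Rightarrow> 'b \<Rightarrow> bool" where
  "is_root C A x \<longleftrightarrow> x \<in> C \<and> (\<forall>a\<in>A. arc_head a \<noteq> x)"

definition dir_path :: "('a \<times> 'b \<times> 'b) set \<Rightarrow> 'b \<Rightarrow> 'b \<Rightarrow> ('a \<times> 'b \<times> 'b) list \<Rightarrow> bool" where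
  "dir_path A x y as \<longleftrightarrow> set as \<subseteq> A \<and> distinct (x # map arc_head as) \<and>
     (if as = [] then x = y
      else arc_tail (hd as) = x \<and> arc_head (last as) = y \<and>
           (\<forall>i. Suc i < length as \<longrightarrow> arc_head (as ! i) = arc_tail (as ! Suc i)))"

end

(*
  Arcs of the dependency graph lead from a link x to a link y whose apex lies on P_x strictly below
  apex x, and the arcs into y all come from the one up-link u with {apex y, parent (apex y)} in P_u,
  so in-degrees are at most one.  The key fact is that a link l' of the component containing apex l
  precedes l on the root-l path H.  Walking along the path to l, either l' also contains the apex of
  the current link, or the walk to l' leaves through an arc g -> q crossing below it while the path
  continues with a sibling arc g -> s.  A link z reachable from s and containing apex q then either
  covers P_u (u the up-link of g -> q) from its top, so that z and F_u - {g} lie in B_(apex s),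
  contradicting the maximal choice of v_u; or the arc entering z comes from u as well, which puts
  apex z below apex q.

  So each counted l' is the tail of an arc of H and is charged to the up-link u of that arc.
  Identifying the edges of P_u with their depths turns F_u into a minimal cover of an interval by
  intervals, in which prec_u orders left endpoints and A_u pairs neighbours.  If two arcs
  x1 -> y1, x2 -> y2 of H came from the same A_u, the interval of y2 would begin beyond the end of
  that of x1, while apex l, reachable from y2, lies below it; so apex l is not in V_x1 and the
  charging is injective.
*)
theory Submission
  imports Defs
begin

section \<open>Paths\<close>

lemma is_path_single[simp]: "is_path E [a]"
  by (simp add: is_path_def)

lemma is_path_appendD1: "is_path E (xs @ ys) \<Longrightarrow> xs \<noteq> [] \<Longrightarrow> is_path E xs"
proof -
  assume a: "is_path E (xs @ ys)" "xs \<noteq> []"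
  show ?thesis unfolding is_path_def
  proof (intro conjI allI impI)
    fix i assume i: "Suc i < length xs"
    with a(1) have "{(xs@ys) ! i, (xs@ys) ! Suc i} \<in> E"
      unfolding is_path_def by auto
    then show "{xs ! i, xs ! Suc i} \<in> E" using i by (simp add: nth_append)
  qed (use a in \<open>auto simp: is_path_def\<close>)
qed

lemma is_path_appendD2: "is_path E (xs @ ys) \<Longrightarrow> ys \<noteq> [] \<Longrightarrow> is_path E ys"
proof -
  assume a: "is_path E (xs @ ys)" "ys \<noteq> []"
  show ?thesis unfolding is_path_def
  proof (intro conjI allI impI)
    fix i assume i: "Suc i < length ys"
    then have "Suc (length xs + i) < length (xs @ ys)" by simp
    with a(1) have "{(xs@ys) ! (length xs + i), (xs@ys) ! Suc (length xs + i)} \<in> E"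
      unfolding is_path_def by blast
    moreover have "(xs@ys) ! (length xs + i) = ys ! i" by (rule nth_append_length_plus)
    moreover have "(xs@ys) ! Suc (length xs + i) = ys ! Suc i"
      using nth_append_length_plus[of xs ys "Suc i"] by simp
    ultimately show "{ys ! i, ys ! Suc i} \<in> E" by simp
  qed (use a in \<open>auto simp: is_path_def\<close>)
qed

lemma is_path_take: "is_path E xs \<Longrightarrow> 0 < k \<Longrightarrow> is_path E (take k xs)"
  by (metis append_take_drop_id is_path_appendD1 is_path_def take_eq_Nil neq0_conv)

lemma is_path_drop: "is_path E xs \<Longrightarrow> k < length xs \<Longrightarrow> is_path E (drop k xs)"
  by (metis append_take_drop_id is_path_appendD2 drop_eq_Nil not_le)

lemma is_path_rev: "is_path E xs \<Longrightarrow> is_path E (rev xs)"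
  unfolding is_path_def
proof (intro conjI allI impI)
  fix i assume a: "xs \<noteq> [] \<and> distinct xs \<and> (\<forall>i. Suc i < length xs \<longrightarrow> {xs ! i, xs ! Suc i} \<in> E)"
    and i: "Suc i < length (rev xs)"
  define j where "j = length xs - Suc (Suc i)"
  have j: "Suc j < length xs" using i by (simp add: j_def)
  have "{xs ! j, xs ! Suc j} \<in> E" using a j by auto
  moreover have "rev xs ! i = xs ! Suc j" "rev xs ! Suc i = xs ! j"
    using i by (auto simp: rev_nth j_def Suc_diff_Suc)
  ultimately show "{rev xs ! i, rev xs ! Suc i} \<in> E" by (simp add: insert_commute)
qed auto

lemma is_path_snoc:
  assumes "is_path E xs" "y \<notin> set xs" "{last xs, y} \<in> E"
  shows "is_path E (xs @ [y])"
  unfolding is_path_def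
proof (intro conjI allI impI)
  fix i assume i: "Suc i < length (xs @ [y])"
  show "{(xs @ [y]) ! i, (xs @ [y]) ! Suc i} \<in> E"
  proof (cases "Suc i < length xs")
    case True then show ?thesis using assms(1) by (simp add: nth_append is_path_def)
  next
    case False
    then have "Suc i = length xs" using i by simp
    have "xs \<noteq> []" using assms(1) by (simp add: is_path_def)
    have "last xs = xs ! i" using \<open>xs \<noteq> []\<close> \<open>Suc i = length xs\<close>
      by (metis diff_Suc_1 last_conv_nth)
    then show ?thesis using assms(3) \<open>Suc i = length xs\<close>
      by (simp add: nth_append)
  qed
qed (use assms in \<open>auto simp: is_path_def\<close>)

lemma path_edges_rev: "path_edges (rev xs) = path_edges xs"
proof -
  have sub: "path_edges (rev xs) \<subseteq> path_edges xs" for xs :: "'a list"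
  proof
    fix e assume "e \<in> path_edges (rev xs)"
    then obtain i where i: "Suc i < length xs" "e = {rev xs ! i, rev xs ! Suc i}"
      by (auto simp: path_edges_def)
    define j where "j = length xs - Suc (Suc i)"
    have "rev xs ! i = xs ! Suc j" "rev xs ! Suc i = xs ! j"
      using i by (auto simp: rev_nth j_def Suc_diff_Suc)
    then have "e = {xs ! j, xs ! Suc j}" using i by auto
    moreover have "Suc j < length xs" using i by (simp add: j_def)
    ultimately show "e \<in> path_edges xs" by (auto simp: path_edges_def)
  qed
  show ?thesis using sub[of xs] sub[of "rev xs"] by simp
qed

lemma hd_take_drop: "i < length xs \<Longrightarrow> hd (take (Suc k) (drop i xs)) = xs ! i"
  by (simp add: hd_drop_conv_nth)

lemma last_take_drop: "i \<le> j \<Longrightarrow> j < length xs \<Longrightarrow> last (take (Suc (j - i)) (drop i xs)) = xs ! j"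
proof -
  assume ij: "i \<le> j" "j < length xs"
  have l: "length (take (Suc (j - i)) (drop i xs)) = Suc (j - i)" using ij by simp
  have "last (take (Suc (j - i)) (drop i xs)) = take (Suc (j - i)) (drop i xs) ! (j - i)"
    using l by (metis diff_Suc_1 last_conv_nth list.size(3) nat.distinct(1))
  also have "\<dots> = xs ! j" using ij by simp
  finally show ?thesis .
qed

lemma UN_doubleton: "a \<noteq> b \<Longrightarrow> (\<Union>x\<in>{a,b}. \<Union>y\<in>{a,b} - {x}. f x y) = f a b \<union> f b a"
  by auto

section \<open>Minimal covers of an interval by intervals\<close>

locale interval_cover =
  fixes n0 n1 :: nat and S :: "'a set" and D :: "'a \<Rightarrow> nat set"
  assumes finS: "finite S"
    and Dsub: "\<And>x. x \<in> S \<Longrightarrow> D x \<subseteq> {n0..n1}"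
    and conv: "\<And>x i j k. x \<in> S \<Longrightarrow> i \<in> D x \<Longrightarrow> k \<in> D x \<Longrightarrow> i \<le> j \<Longrightarrow> j \<le> k \<Longrightarrow> j \<in> D x"
    and cover: "{n0..n1} \<subseteq> \<Union>(D ` S)"
    and minimal: "\<And>S'. S' \<subset> S \<Longrightarrow> \<not> {n0..n1} \<subseteq> \<Union>(D ` S')"
begin

definition own where "own x = {n0..n1} - \<Union>(D ` (S - {x}))"
definition before where "before x y \<longleftrightarrow> (\<forall>i\<in>own x. \<forall>j\<in>own y. i < j)"
definition lo where "lo x = Min (D x)"
definition hi where "hi x = Max (D x)"
definition consec where "consec x y \<longleftrightarrow> x \<in> S \<and> y \<in> S \<and> x \<noteq> y \<and> before x y \<and>
   \<not> (\<exists>z\<in>S. z \<noteq> x \<and> z \<noteq> y \<and> before x z \<and> before z y)"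

lemma own_nonempty: assumes "x \<in> S" shows "own x \<noteq> {}"
proof
  assume "own x = {}"
  then have "{n0..n1} \<subseteq> \<Union>(D ` (S - {x}))" unfolding own_def by blast
  moreover have "S - {x} \<subset> S" using assms by blast
  ultimately show False using minimal by blast
qed

lemma own_D: assumes "x \<in> S" "i \<in> own x" shows "i \<in> D x" "i \<in> {n0..n1}" "\<And>y. y \<in> S \<Longrightarrow> y \<noteq> x \<Longrightarrow> i \<notin> D y"
proof -
  show "i \<in> {n0..n1}" using assms by (simp add: own_def)
  then obtain y where "y \<in> S" "i \<in> D y" using cover by blast
  moreover have "\<And>y. y \<in> S \<Longrightarrow> y \<noteq> x \<Longrightarrow> i \<notin> D y" using assms by (auto simp: own_def)
  ultimately show "i \<in> D x" by (cases "y = x") auto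
  show "\<And>y. y \<in> S \<Longrightarrow> y \<noteq> x \<Longrightarrow> i \<notin> D y" using assms by (auto simp: own_def)
qed

lemma D_nonempty: "x \<in> S \<Longrightarrow> D x \<noteq> {}"
  using own_nonempty own_D by blast

lemma finite_D: "x \<in> S \<Longrightarrow> finite (D x)"
  using Dsub finite_subset by blast

lemma D_interval: assumes "x \<in> S" shows "D x = {lo x..hi x}" "lo x \<le> hi x" "n0 \<le> lo x" "hi x \<le> n1"
proof -
  have f: "finite (D x)" "D x \<noteq> {}" using finite_D D_nonempty assms by auto
  have l: "lo x \<in> D x" "hi x \<in> D x" using f by (auto simp: lo_def hi_def)
  show "D x = {lo x..hi x}"
  proof
    show "D x \<subseteq> {lo x..hi x}" using f by (auto simp: lo_def hi_def)
    show "{lo x..hi x} \<subseteq> D x" using conv[OF assms l(1) l(2)] by auto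
  qed
  show "lo x \<le> hi x" using f by (simp add: lo_def hi_def)
  show "n0 \<le> lo x" using l Dsub[OF assms] by auto
  show "hi x \<le> n1" using l Dsub[OF assms] by auto
qed

lemma D_not_subset: assumes "x \<in> S" "y \<in> S" "x \<noteq> y" shows "\<not> D x \<subseteq> D y"
proof
  assume "D x \<subseteq> D y"
  obtain i where "i \<in> own x" using own_nonempty assms by blast
  then show False using own_D[OF assms(1)] assms \<open>D x \<subseteq> D y\<close> by blast
qed

lemma lo_inj: assumes "x \<in> S" "y \<in> S" "x \<noteq> y" shows "lo x \<noteq> lo y"
proof
  assume e: "lo x = lo y"
  note dx = D_interval[OF assms(1)] and dy = D_interval[OF assms(2)]
  show False
  proof (cases "hi x \<le> hi y")
    case True then have "D x \<subseteq> D y" using dx dy e by auto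
    then show False using D_not_subset assms by blast
  next
    case False then have "D y \<subseteq> D x" using dx dy e by auto
    then show False using D_not_subset assms by blast
  qed
qed

lemma lo_hi_mono: assumes "x \<in> S" "y \<in> S" "lo x < lo y" shows "hi x < hi y"
proof (rule ccontr)
  assume "\<not> hi x < hi y"
  then have "D y \<subseteq> D x" using D_interval[OF assms(1)] D_interval[OF assms(2)] assms(3) by auto
  moreover have "x \<noteq> y" using assms by auto
  ultimately show False using D_not_subset assms by blast
qed

lemma before_if_lo_less: assumes "x \<in> S" "y \<in> S" "lo x < lo y" shows "before x y"
  unfolding before_def
proof (intro ballI)
  fix i j assume i: "i \<in> own x" and j: "j \<in> own y"
  have xy: "x \<noteq> y" using assms by auto
  have "i \<in> D x" "i \<notin> D y" "j \<in> D y" "j \<notin> D x" using own_D i j assms xy by auto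
  then show "i < j" using D_interval[OF assms(1)] D_interval[OF assms(2)] lo_hi_mono[OF assms] by auto
qed

lemma before_iff_lo_less: assumes "x \<in> S" "y \<in> S" "x \<noteq> y" shows "before x y \<longleftrightarrow> lo x < lo y"
proof
  assume p: "before x y"
  show "lo x < lo y"
  proof (rule ccontr)
    assume "\<not> lo x < lo y"
    then have "lo y < lo x" using lo_inj assms by fastforce
    then have "before y x" using before_if_lo_less assms by blast
    obtain i j where "i \<in> own x" "j \<in> own y" using own_nonempty assms by blast
    then show False using p \<open>before y x\<close> unfolding before_def by force
  qed
qed (rule before_if_lo_less[OF assms(1,2)])

lemma consec_lo_le_Suc_hi: assumes c: "consec x y" shows "lo y \<le> Suc (hi x)"
proof (rule ccontr)
  assume a: "\<not> lo y \<le> Suc (hi x)"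
  have xy: "x \<in> S" "y \<in> S" "x \<noteq> y" "before x y" using c by (auto simp: consec_def)
  have lxy: "lo x < lo y" using before_iff_lo_less xy by blast
  note dx = D_interval[OF xy(1)] and dy = D_interval[OF xy(2)]
  let ?d = "Suc (hi x)"
  have "?d \<in> {n0..n1}" using dx dy a by auto
  then obtain z where z: "z \<in> S" "?d \<in> D z" using cover by blast
  note dz = D_interval[OF z(1)]
  have zx: "z \<noteq> x" using z dx by auto
  have zy: "z \<noteq> y" using z dy a by auto
  have "lo x < lo z"
  proof (rule ccontr)
    assume "\<not> lo x < lo z"
    then have "lo z < lo x" using lo_inj z xy zx by fastforce
    then have "hi z < hi x" using lo_hi_mono z xy by blast
    then show False using z dz by auto
  qed
  moreover have "lo z < lo y" using z dz a by auto
  ultimately have "before x z" "before z y" using before_if_lo_less z xy by auto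
  then show False using c z zx zy by (auto simp: consec_def)
qed

lemma between_Suc_hi_less_lo: assumes "x \<in> S" "y \<in> S" "z \<in> S" "before x z" "before z y"
  shows "Suc (hi x) < lo y"
proof (rule ccontr)
  assume a: "\<not> Suc (hi x) < lo y"
  have xz: "x \<noteq> z" "z \<noteq> y"
  proof -
    obtain i where "i \<in> own z" using own_nonempty assms by blast
    then show "x \<noteq> z" "z \<noteq> y" using assms(4,5) unfolding before_def by force+
  qed
  have l1: "lo x < lo z" using before_iff_lo_less assms xz by blast
  have l2: "lo z < lo y" using before_iff_lo_less assms xz by blast
  have h2: "hi z < hi y" using lo_hi_mono assms l2 by blast
  have "D z \<subseteq> D x \<union> D y" using D_interval[OF assms(1)] D_interval[OF assms(2)] D_interval[OF assms(3)] l1 h2 a by auto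
  moreover obtain i where i: "i \<in> own z" using own_nonempty assms by blast
  moreover have "x \<noteq> y" using l1 l2 by auto
  ultimately show False using own_D[OF assms(3) i] assms xz by blast
qed

lemma lo_gt_if_first: assumes "g \<in> S" "z \<in> S" "lo g = n0" "z \<noteq> g" shows "n0 < lo z"
proof -
  have "lo z \<noteq> lo g" using lo_inj assms by blast
  moreover have "n0 \<le> lo z" using D_interval(3)[OF assms(2)] .
  ultimately show ?thesis using assms(3) by simp
qed

lemma lo_succ_less_if_first: assumes c: "consec g q" and g0: "lo g = n0" and z: "z \<in> S" "z \<noteq> g" "z \<noteq> q"
  shows "lo q < lo z"
proof -
  have gq: "g \<in> S" "q \<in> S" "g \<noteq> q" "before g q" using c by (auto simp: consec_def)
  have "n0 < lo z" using lo_gt_if_first gq z g0 by blast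
  then have "before g z" using before_if_lo_less gq z g0 by simp
  then have "\<not> before z q" using c z by (auto simp: consec_def)
  then have "\<not> lo z < lo q" using before_if_lo_less z gq by blast
  then show ?thesis using lo_inj z gq by fastforce
qed

lemma own_less_lo_succ: assumes c: "consec g q" and i: "i \<in> own g" shows "i < lo q"
proof (rule ccontr)
  assume a: "\<not> i < lo q"
  have gq: "g \<in> S" "q \<in> S" "g \<noteq> q" "before g q" using c by (auto simp: consec_def)
  obtain j where j: "j \<in> own q" using own_nonempty gq by blast
  have "i < j" using gq(4) i j unfolding before_def by blast
  moreover have "j \<le> hi q" using own_D[OF gq(2) j] D_interval[OF gq(2)] by auto
  ultimately have "i \<in> D q" using a D_interval[OF gq(2)] by auto
  then show False using own_D[OF gq(1) i] gq by blast
qed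

lemma consec_succ_unique: assumes "consec x y" "consec x y'" shows "y = y'"
proof (rule ccontr)
  assume ne: "y \<noteq> y'"
  have s: "x \<in> S" "y \<in> S" "y' \<in> S" "x \<noteq> y" "x \<noteq> y'" "before x y" "before x y'"
    using assms by (auto simp: consec_def)
  show False
  proof (cases "lo y < lo y'")
    case True
    then have "before y y'" using before_if_lo_less s by blast
    then show False using assms(2) s ne by (auto simp: consec_def)
  next
    case False
    then have "lo y' < lo y" using lo_inj s ne by fastforce
    then have "before y' y" using before_if_lo_less s by blast
    then show False using assms(1) s ne by (auto simp: consec_def)
  qed
qed

lemma consec_pred_unique: assumes "consec x y" "consec x' y" shows "x = x'"
proof (rule ccontr)
  assume ne: "x \<noteq> x'"
  have s: "x \<in> S" "y \<in> S" "x' \<in> S" "x \<noteq> y" "x' \<noteq> y" "before x y" "before x' y"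
    using assms by (auto simp: consec_def)
  show False
  proof (cases "lo x < lo x'")
    case True
    then have "before x x'" using before_if_lo_less s by blast
    then show False using assms(1) s ne by (auto simp: consec_def)
  next
    case False
    then have "lo x' < lo x" using lo_inj s ne by fastforce
    then have "before x' x" using before_if_lo_less s by blast
    then show False using assms(2) s ne by (auto simp: consec_def)
  qed
qed

end

section \<open>Rooted trees and links\<close>

locale rooted_tree =
  fixes V :: "'v set" and E :: "'v set set" and r :: 'v
  assumes tree: "is_tree V E" and rV: "r \<in> V"
begin

abbreviation tp where "tp \<equiv> tree_path E"
abbreviation anc where "anc \<equiv> ancestor E r"
abbreviation dep where "dep \<equiv> depth E r"

lemma finite_V: "finite V" using tree by (simp add: is_tree_def)

lemma E_subset: "E \<subseteq> {{a, b} | a b. a \<in> V \<and> b \<in> V \<and> a \<noteq> b}"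
  using tree by (simp add: is_tree_def)

lemma edgeE: assumes "e \<in> E" obtains a b where "e = {a,b}" "a \<in> V" "b \<in> V" "a \<noteq> b"
  using assms E_subset by blast

lemma edge_V: "{a, b} \<in> E \<Longrightarrow> a \<in> V \<and> b \<in> V \<and> a \<noteq> b"
  by (metis doubleton_eq_iff edgeE)

lemma tp_ex1: "a \<in> V \<Longrightarrow> b \<in> V \<Longrightarrow> \<exists>!xs. is_path E xs \<and> hd xs = a \<and> last xs = b"
  using tree by (simp add: is_tree_def)

lemma tp_props: assumes "a \<in> V" "b \<in> V"
  shows "is_path E (tp a b)" "hd (tp a b) = a" "last (tp a b) = b"
  using theI'[OF tp_ex1[OF assms]] unfolding tree_path_def by auto

lemma tp_unique: assumes "a \<in> V" "b \<in> V" "is_path E xs" "hd xs = a" "last xs = b"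
  shows "tp a b = xs"
  unfolding tree_path_def using tp_ex1[OF assms(1,2)] assms(3-5)
  by (simp add: the1_equality)

lemma is_path_set_subset: assumes "is_path E xs" "hd xs \<in> V" shows "set xs \<subseteq> V"
proof
  fix x assume x: "x \<in> set xs"
  then obtain i where i: "i < length xs" "xs ! i = x" by (auto simp: in_set_conv_nth)
  show "x \<in> V"
  proof (cases i)
    case 0 then show ?thesis using i assms by (metis hd_conv_nth is_path_def)
  next
    case (Suc j)
    then have "{xs ! j, xs ! i} \<in> E" using assms i unfolding is_path_def by auto
    then show ?thesis using edge_V i by auto
  qed
qed

lemma tp_ne: "a \<in> V \<Longrightarrow> b \<in> V \<Longrightarrow> tp a b \<noteq> []"
  using tp_props(1) is_path_def by blast

lemma tp_V: "a \<in> V \<Longrightarrow> b \<in> V \<Longrightarrow> set (tp a b) \<subseteq> V"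
  using is_path_set_subset tp_props by metis

lemma tp_refl: "a \<in> V \<Longrightarrow> tp a a = [a]"
  by (rule tp_unique) auto

lemma tp_rev: "a \<in> V \<Longrightarrow> b \<in> V \<Longrightarrow> tp b a = rev (tp a b)"
  by (rule tp_unique) (auto simp: tp_props is_path_rev tp_ne hd_rev last_rev)

lemma tp_edge: "{a,b} \<in> E \<Longrightarrow> tp a b = [a,b]"
  using edge_V[of a b]
  by (intro tp_unique) (auto simp: is_path_def nth_Cons split: nat.splits)

lemma tp_sublist:
  assumes p: "is_path E xs" and V: "hd xs \<in> V" and ij: "i \<le> j" "j < length xs"
  shows "tp (xs ! i) (xs ! j) = take (Suc (j - i)) (drop i xs)"
proof -
  have sV: "set xs \<subseteq> V" using is_path_set_subset p V by auto
  have il: "i < length xs" using ij by simp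
  have p2: "is_path E (drop i xs)" using is_path_drop p il by blast
  have p3: "is_path E (take (Suc (j - i)) (drop i xs))" using is_path_take p2 by blast
  show ?thesis
    apply (rule tp_unique)
    using sV ij p3 hd_take_drop[OF il] last_take_drop[OF ij] by auto
qed

lemma set_tp_subset:
  assumes p: "is_path E xs" and V: "hd xs \<in> V" and xy: "x \<in> set xs" "y \<in> set xs"
  shows "set (tp x y) \<subseteq> set xs"
proof -
  obtain i j where i: "i < length xs" "xs ! i = x" and j: "j < length xs" "xs ! j = y"
    using xy by (auto simp: in_set_conv_nth)
  have sV: "set xs \<subseteq> V" using is_path_set_subset p V by auto
  show ?thesis
  proof (cases "i \<le> j")
    case True
    then show ?thesis using tp_sublist[OF p V True j(1)] i j
      by (metis set_drop_subset set_take_subset subset_trans)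
  next
    case False
    then have "tp y x = take (Suc (i - j)) (drop j xs)" using tp_sublist[OF p V _ i(1), of j] i j by simp
    moreover have "tp x y = rev (tp y x)" using tp_rev sV i j by (metis nth_mem subsetD)
    ultimately show ?thesis
      by (metis set_drop_subset set_rev set_take_subset subset_trans)
  qed
qed

lemma edge_in_path_edges:
  assumes p: "is_path E xs" and V: "hd xs \<in> V" and xy: "x \<in> set xs" "y \<in> set xs"
    and e: "{x,y} \<in> E"
  shows "{x,y} \<in> path_edges xs"
proof -
  obtain i j where i: "i < length xs" "xs ! i = x" and j: "j < length xs" "xs ! j = y"
    using xy by (auto simp: in_set_conv_nth)
  have xy': "x \<noteq> y" using edge_V e by auto
  have key: "{x,y} \<in> path_edges xs" if ij: "i \<le> j" "xs ! i = x" "xs ! j = y" "j < length xs" "{x,y} \<in> E" for i j x y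
  proof -
    have "tp x y = take (Suc (j - i)) (drop i xs)" using tp_sublist[OF p V ij(1) ij(4)] ij by simp
    moreover have "tp x y = [x,y]" using tp_edge ij(5) by simp
    ultimately have t: "take (Suc (j - i)) (drop i xs) = [x,y]" by simp
    have "length (take (Suc (j - i)) (drop i xs)) = Suc (j - i)" using ij by simp
    with t have "Suc (j - i) = 2" by simp
    then have "j = Suc i" using ij by auto
    then show ?thesis using ij unfolding path_edges_def by auto
  qed
  show ?thesis
  proof (cases "i \<le> j")
    case True then show ?thesis using key i j e by blast
  next
    case False then show ?thesis using key[of j i y x] i j e by (simp add: insert_commute)
  qed
qed

lemma tp_from_root: "v \<in> V \<Longrightarrow> is_path E (tp r v) \<and> hd (tp r v) = r \<and> last (tp r v) = v"
  using tp_props rV by blast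

lemma dep_pos: "v \<in> V \<Longrightarrow> 0 < dep v"
  using tp_ne rV by (simp add: depth_def)

lemma anc_refl: "v \<in> V \<Longrightarrow> anc v v"
  using tp_from_root tp_ne rV by (metis ancestor_def last_in_set)

lemma anc_root: "v \<in> V \<Longrightarrow> anc r v"
  using tp_from_root tp_ne rV by (metis ancestor_def hd_in_set)

lemma anc_V: "v \<in> V \<Longrightarrow> anc x v \<Longrightarrow> x \<in> V"
  using tp_V rV by (auto simp: ancestor_def)

lemma tp_prefix:
  assumes v: "v \<in> V" and i: "i < length (tp r v)"
  shows "tp r (tp r v ! i) = take (Suc i) (tp r v)"
proof -
  have "tp (tp r v ! 0) (tp r v ! i) = take (Suc i) (tp r v)"
    using tp_sublist[of "tp r v" 0 i] tp_from_root[OF v] i rV by simp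
  moreover have "tp r v ! 0 = r" using tp_from_root[OF v] tp_ne[OF rV v] by (metis hd_conv_nth)
  ultimately show ?thesis by simp
qed

lemma anc_take: assumes v: "v \<in> V" and a: "anc x v"
  shows "tp r x = take (dep x) (tp r v)"
proof -
  obtain i where i: "i < length (tp r v)" "tp r v ! i = x" using a by (auto simp: ancestor_def in_set_conv_nth)
  then have "tp r x = take (Suc i) (tp r v)" using tp_prefix v by metis
  moreover then have "dep x = Suc i" using i by (simp add: depth_def)
  ultimately show ?thesis by simp
qed

lemma anc_dep_le: assumes "v \<in> V" "anc x v" shows "dep x \<le> dep v"
proof -
  have "length (tp r x) = length (take (dep x) (tp r v))" using anc_take[OF assms] by simp
  then show ?thesis by (simp add: depth_def min_def split: if_splits)
qed

lemma anc_nth: assumes v: "v \<in> V" and a: "anc x v"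
  shows "tp r v ! (dep x - 1) = x"
proof -
  have xV: "x \<in> V" using anc_V v a by blast
  have t: "tp r x = take (dep x) (tp r v)" using anc_take v a by blast
  have p: "0 < dep x" using dep_pos xV by blast
  have le: "dep x \<le> length (tp r v)" using anc_dep_le v a by (simp add: depth_def)
  have "x = last (tp r x)" using tp_from_root xV by simp
  also have "\<dots> = tp r x ! (dep x - 1)"
    using tp_ne[OF rV xV] by (simp add: last_conv_nth depth_def)
  also have "\<dots> = tp r v ! (dep x - 1)" using t p le by simp
  finally show ?thesis by simp
qed

lemma anc_eq: assumes v: "v \<in> V" and a: "anc x v" and d: "dep x = dep v" shows "x = v"
proof -
  have "x = tp r v ! (dep x - 1)" using anc_nth[OF v a] by simp
  also have "\<dots> = tp r v ! (dep v - 1)" using d by simp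
  also have "\<dots> = v" using anc_nth[OF v anc_refl[OF v]] by simp
  finally show ?thesis .
qed

lemma anc_trans: assumes "anc x y" "anc y z" "z \<in> V" shows "anc x z"
proof -
  have yV: "y \<in> V" using anc_V assms by blast
  have "tp r y = take (dep y) (tp r z)" using anc_take assms yV by blast
  then have "set (tp r y) \<subseteq> set (tp r z)" using set_take_subset by metis
  then show ?thesis using assms(1) unfolding ancestor_def by blast
qed

lemma anc_antisym: "anc x y \<Longrightarrow> anc y x \<Longrightarrow> y \<in> V \<Longrightarrow> x = y"
  by (meson anc_V anc_dep_le anc_eq le_antisym)

lemma anc_linear: assumes "anc x v" "anc y v" "v \<in> V" shows "anc x y \<or> anc y x"
proof -
  have xV: "x \<in> V" and yV: "y \<in> V" using anc_V assms by blast+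
  have tx: "tp r x = take (dep x) (tp r v)" and ty: "tp r y = take (dep y) (tp r v)"
    using anc_take assms by blast+
  show ?thesis
  proof (cases "dep x \<le> dep y")
    case True
    then have "take (dep x) (tp r y) = tp r x" using tx ty by (simp add: min_def)
    moreover have "x \<in> set (tp r x)" using anc_refl[OF xV] by (simp add: ancestor_def)
    ultimately have "x \<in> set (tp r y)" by (metis in_set_takeD)
    then show ?thesis by (simp add: ancestor_def)
  next
    case False
    then have "take (dep y) (tp r x) = tp r y" using tx ty by (simp add: min_def)
    moreover have "y \<in> set (tp r y)" using anc_refl[OF yV] by (simp add: ancestor_def)
    ultimately have "y \<in> set (tp r x)" by (metis in_set_takeD)
    then show ?thesis by (simp add: ancestor_def)
  qed
qed

lemma anc_if_dep_le: assumes "anc x v" "anc y v" "v \<in> V" "dep x \<le> dep y" shows "anc x y"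
proof -
  have xV: "x \<in> V" using anc_V assms by blast
  show ?thesis
  proof (cases "anc x y")
    case False
    then have "anc y x" using anc_linear[OF assms(1-3)] by blast
    moreover then have "dep y \<le> dep x" using anc_dep_le xV by blast
    ultimately have "y = x" using anc_eq xV assms(4) by simp
    then show ?thesis using anc_refl xV by simp
  qed simp
qed

definition parent :: "'v \<Rightarrow> 'v" where "parent v = tp r v ! (dep v - 2)"

lemma dep_root: "dep r = 1" using tp_refl rV by (simp add: depth_def)

lemma dep_ge_2: assumes "v \<in> V" "v \<noteq> r" shows "2 \<le> dep v"
proof (rule ccontr)
  assume "\<not> 2 \<le> dep v"
  then have "dep v = 1" using dep_pos[OF assms(1)] by simp
  then have "dep r = dep v" using dep_root by simp
  then have "r = v" using anc_eq[OF assms(1) anc_root[OF assms(1)]] by simp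
  then show False using assms by simp
qed

lemma parent_props: assumes v: "v \<in> V" "v \<noteq> r"
  shows "parent v \<in> V" "anc (parent v) v" "dep (parent v) = dep v - 1" "{parent v, v} \<in> E" "parent v \<noteq> v"
proof -
  have d: "2 \<le> dep v" using dep_ge_2 v by blast
  let ?xs = "tp r v"
  have l: "length ?xs = dep v" by (simp add: depth_def)
  have inset: "parent v \<in> set ?xs" unfolding parent_def using d l by simp
  then show a: "anc (parent v) v" by (simp add: ancestor_def)
  show pV: "parent v \<in> V" using anc_V v a by blast
  have "tp r (parent v) = take (Suc (dep v - 2)) ?xs" unfolding parent_def
  proof (rule tp_prefix[OF v(1)])
    show "dep v - 2 < length (tp r v)" using d l by simp
  qed
  then show dp: "dep (parent v) = dep v - 1" using d by (simp add: depth_def)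
  have "{?xs ! (dep v - 2), ?xs ! Suc (dep v - 2)} \<in> E"
    using tp_from_root[OF v(1)] d l unfolding is_path_def by auto
  moreover have "?xs ! Suc (dep v - 2) = v"
  proof -
    have "Suc (dep v - 2) = dep v - 1" using d by simp
    then show ?thesis using anc_nth[OF v(1) anc_refl[OF v(1)]] by simp
  qed
  ultimately show "{parent v, v} \<in> E" by (simp add: parent_def)
  show "parent v \<noteq> v" using dp d by auto
qed

lemma anc_parent: assumes v: "v \<in> V" and a: "anc x v" and ne: "x \<noteq> v"
  shows "anc x (parent v)"
proof -
  have vr: "v \<noteq> r"
  proof
    assume "v = r"
    then have "anc x r" using a by simp
    moreover have "x \<in> V" using anc_V v a by blast
    moreover then have "anc r x" using anc_root by blast
    ultimately have "x = r" using anc_antisym rV by blast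
    then show False using ne \<open>v = r\<close> by simp
  qed
  note pp = parent_props[OF v vr]
  have "dep x \<noteq> dep v" using anc_eq v a ne by blast
  moreover have "dep x \<le> dep v" by (rule anc_dep_le[OF v a])
  ultimately have "dep x \<le> dep (parent v)" using pp(3) by simp
  then show ?thesis by (rule anc_if_dep_le[OF a pp(2) v])
qed

lemma tp_vertical: assumes "anc x y" "y \<in> V"
  shows "tp x y = drop (dep x - 1) (tp r y)"
proof -
  have xV: "x \<in> V" using anc_V assms by blast
  have d: "0 < dep x" "dep x \<le> dep y" using dep_pos xV anc_dep_le assms by auto
  have l: "length (tp r y) = dep y" by (simp add: depth_def)
  have "tp (tp r y ! (dep x - 1)) (tp r y ! (dep y - 1)) = take (Suc (dep y - 1 - (dep x - 1))) (drop (dep x - 1) (tp r y))"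
    using tp_sublist[of "tp r y" "dep x - 1" "dep y - 1"] tp_from_root[OF assms(2)] d l rV by simp
  moreover have "tp r y ! (dep x - 1) = x" using anc_nth[OF assms(2,1)] .
  moreover have "tp r y ! (dep y - 1) = y" using anc_nth[OF assms(2) anc_refl[OF assms(2)]] .
  moreover have "take (Suc (dep y - 1 - (dep x - 1))) (drop (dep x - 1) (tp r y)) = drop (dep x - 1) (tp r y)"
    using d l by (intro take_all) simp
  ultimately show ?thesis by simp
qed

lemma edge_parent: assumes e: "{x,y} \<in> E"
  shows "(y \<noteq> r \<and> x = parent y) \<or> (x \<noteq> r \<and> y = parent x)"
proof -
  have V: "x \<in> V" "y \<in> V" "x \<noteq> y" using edge_V e by auto
  show ?thesis
  proof (cases "x \<in> set (tp r y)")
    case True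
    then have a: "anc x y" by (simp add: ancestor_def)
    have yr: "y \<noteq> r" using a V anc_antisym anc_root by blast
    have "tp x y = drop (dep x - 1) (tp r y)" using tp_vertical a V by blast
    moreover have "tp x y = [x,y]" using tp_edge e by blast
    ultimately have t: "drop (dep x - 1) (tp r y) = [x,y]" by simp
    have "length (drop (dep x - 1) (tp r y)) = 2" unfolding t by simp
    then have "dep y - (dep x - 1) = 2" by (simp add: depth_def)
    moreover have "0 < dep x" using dep_pos V by blast
    ultimately have d: "dep x = dep (parent y)" using parent_props[OF V(2) yr] by simp
    have "anc x (parent y)" using anc_parent V a by blast
    then have "x = parent y" using anc_eq parent_props[OF V(2) yr] d by metis
    then show ?thesis using yr by blast
  next
    case False
    have "is_path E (tp r y @ [x])"
      using is_path_snoc[of E "tp r y" x] tp_from_root[OF V(2)] False e by (simp add: insert_commute)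
    then have "tp r x = tp r y @ [x]" using tp_unique[OF rV V(1)] tp_from_root[OF V(2)] tp_ne rV V by auto
    moreover have "y \<in> set (tp r y)" using anc_refl V by (simp add: ancestor_def)
    ultimately have "anc y x" "dep x = Suc (dep y)" by (auto simp: ancestor_def depth_def)
    moreover have xr: "x \<noteq> r" using calculation(2) dep_root dep_pos[OF V(2)] by auto
    ultimately have "anc y (parent x)" "dep (parent x) = dep y"
      using anc_parent parent_props V by auto
    then have "y = parent x" using anc_eq parent_props V xr by metis
    then show ?thesis using xr by blast
  qed
qed

lemma set_tp_vertical: assumes "anc x y" "y \<in> V"
  shows "set (tp x y) = {z. anc x z \<and> anc z y}"
proof -
  have xV: "x \<in> V" using anc_V assms by blast
  have dx: "0 < dep x" "dep x \<le> dep y" using dep_pos xV anc_dep_le assms by auto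
  have l: "length (tp r y) = dep y" by (simp add: depth_def)
  have xn: "tp r y ! (dep x - 1) = x" using anc_nth assms by blast
  show ?thesis
  proof safe
    fix z assume z: "z \<in> set (tp x y)"
    then have zd: "z \<in> set (drop (dep x - 1) (tp r y))" using tp_vertical[OF assms] by simp
    then have zy: "anc z y" by (auto simp: ancestor_def dest: in_set_dropD)
    obtain i where i: "i < length (drop (dep x - 1) (tp r y))" "drop (dep x - 1) (tp r y) ! i = z"
      using zd by (auto simp: in_set_conv_nth)
    have il: "dep x - 1 + i < length (tp r y)" using i by simp
    have zz: "z = tp r y ! (dep x - 1 + i)" using i dx by simp
    then have "tp r z = take (Suc (dep x - 1 + i)) (tp r y)" using tp_prefix assms(2) il by simp
    moreover have "x \<in> set (take (Suc (dep x - 1 + i)) (tp r y))"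
    proof -
      have "take (Suc (dep x - 1 + i)) (tp r y) ! (dep x - 1) = x" using xn by simp
      moreover have "dep x - 1 < length (take (Suc (dep x - 1 + i)) (tp r y))" using il by simp
      ultimately show ?thesis using nth_mem by metis
    qed
    ultimately show "anc x z" by (simp add: ancestor_def)
    show "anc z y" by (rule zy)
  next
    fix z assume z: "anc x z" "anc z y"
    have zV: "z \<in> V" using anc_V z assms by blast
    have d1: "dep x \<le> dep z" using anc_dep_le z zV by blast
    have d2: "dep z \<le> dep y" using anc_dep_le z assms by blast
    have zn: "tp r y ! (dep z - 1) = z" using anc_nth z assms by blast
    have "drop (dep x - 1) (tp r y) ! (dep z - dep x) = tp r y ! (dep x - 1 + (dep z - dep x))"
      using l d1 d2 dx by simp
    also have "dep x - 1 + (dep z - dep x) = dep z - 1" using d1 dx by simp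
    finally have "drop (dep x - 1) (tp r y) ! (dep z - dep x) = z" using zn by simp
    moreover have "dep z - dep x < length (drop (dep x - 1) (tp r y))" using l d1 d2 dx by simp
    ultimately have "z \<in> set (drop (dep x - 1) (tp r y))" by (metis nth_mem)
    then show "z \<in> set (tp x y)" using tp_vertical[OF assms] by simp
  qed
qed

definition is_link where "is_link l \<longleftrightarrow> (\<exists>a b. l = {a,b} \<and> a \<in> V \<and> b \<in> V \<and> a \<noteq> b)"

lemma Vl_pair: assumes "a \<in> V" "b \<in> V" "a \<noteq> b" shows "Vl E {a,b} = set (tp a b)"
proof -
  have "Vl E {a,b} = (\<Union>x\<in>{a,b}. \<Union>y\<in>{a,b} - {x}. set (tp x y))" unfolding Vl_def by (rule refl)
  also have "\<dots> = set (tp a b) \<union> set (tp b a)" by (rule UN_doubleton[OF assms(3)])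
  also have "set (tp b a) = set (tp a b)" by (simp add: tp_rev[OF assms(1,2)])
  finally show ?thesis by simp
qed

lemma Pl_pair: assumes "a \<in> V" "b \<in> V" "a \<noteq> b" shows "Pl E {a,b} = path_edges (tp a b)"
proof -
  have "Pl E {a,b} = (\<Union>x\<in>{a,b}. \<Union>y\<in>{a,b} - {x}. path_edges (tp x y))" unfolding Pl_def by (rule refl)
  also have "\<dots> = path_edges (tp a b) \<union> path_edges (tp b a)" by (rule UN_doubleton[OF assms(3)])
  also have "path_edges (tp b a) = path_edges (tp a b)" by (simp add: tp_rev[OF assms(1,2)] path_edges_rev)
  finally show ?thesis by simp
qed

lemma link_path: assumes "is_link l"
  obtains xs where "is_path E xs" "hd xs \<in> V" "Vl E l = set xs" "Pl E l = path_edges xs"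
  using assms Vl_pair Pl_pair tp_props unfolding is_link_def by metis

lemma Vl_subset_nonempty: assumes "is_link l" shows "Vl E l \<subseteq> V" "Vl E l \<noteq> {}"
proof -
  obtain xs where xs: "is_path E xs" "hd xs \<in> V" "Vl E l = set xs" "Pl E l = path_edges xs"
    using link_path assms by blast
  show "Vl E l \<subseteq> V" using is_path_set_subset xs by simp
  show "Vl E l \<noteq> {}" using xs by (simp add: is_path_def)
qed

abbreviation ap where "ap \<equiv> apex E r"

lemma apex_min: assumes "is_link l" shows "ap l \<in> Vl E l" "\<And>z. z \<in> Vl E l \<Longrightarrow> dep (ap l) \<le> dep z"
proof -
  obtain z0 where "z0 \<in> Vl E l" using Vl_subset_nonempty assms by blast
  note a = arg_min_nat_lemma[of "\<lambda>x. x \<in> Vl E l", OF this, of "dep"]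
  show "ap l \<in> Vl E l" using a by (simp add: apex_def)
  show "\<And>z. z \<in> Vl E l \<Longrightarrow> dep (ap l) \<le> dep z" using a by (simp add: apex_def)
qed

lemma path_anc_hd:
  assumes "is_path E ys" "hd ys \<in> V" "\<forall>z\<in>set ys. dep (hd ys) \<le> dep z"
  shows "\<forall>z\<in>set ys. anc (hd ys) z"
  using assms
proof (induction ys rule: rev_induct)
  case Nil then show ?case by simp
next
  case (snoc y ys)
  show ?case
  proof (cases "ys = []")
    case True
    then show ?thesis using snoc anc_refl by simp
  next
    case False
    have p: "is_path E ys" using is_path_appendD1 snoc(2) False by blast
    have h: "hd (ys @ [y]) = hd ys" using False by simp
    have IH: "\<forall>z\<in>set ys. anc (hd ys) z" using snoc.IH p snoc(3,4) h by simp
    let ?x = "last ys"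
    have e: "{?x, y} \<in> E"
    proof -
      have "Suc (length ys - 1) < length (ys @ [y])" using False by simp
      then have "{(ys@[y]) ! (length ys - 1), (ys@[y]) ! Suc (length ys - 1)} \<in> E"
        using snoc(2) unfolding is_path_def by blast
      moreover have "(ys@[y]) ! (length ys - 1) = ?x" using False by (simp add: nth_append last_conv_nth)
      moreover have "(ys@[y]) ! Suc (length ys - 1) = y" using False by (simp add: nth_append)
      ultimately show ?thesis by simp
    qed
    have ax: "anc (hd ys) ?x" using IH False by simp
    have yV: "y \<in> V" using edge_V e by blast
    have "anc (hd ys) y"
    proof (cases "y \<noteq> r \<and> ?x = parent y")
      case True
      then have "anc ?x y" using parent_props yV by metis
      then show ?thesis using anc_trans ax yV by blast
    next
      case False
      then have xr: "?x \<noteq> r" "y = parent ?x" using edge_parent e by blast+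
      have xV: "?x \<in> V" using edge_V e by blast
      have "anc y ?x" using parent_props xV xr by metis
      moreover have "dep (hd ys) \<le> dep y" using snoc(4) h by simp
      ultimately show ?thesis using anc_if_dep_le[OF ax _ xV] by blast
    qed
    then show ?thesis using IH h by simp
  qed
qed

lemma apex_anc: assumes l: "is_link l" and z: "z \<in> Vl E l" shows "anc (ap l) z"
proof -
  obtain xs where xs: "is_path E xs" "hd xs \<in> V" "Vl E l = set xs" "Pl E l = path_edges xs"
    using link_path l by blast
  have sV: "set xs \<subseteq> V" using is_path_set_subset xs by simp
  obtain k where k: "k < length xs" "xs ! k = ap l" using apex_min(1)[OF l] xs(3) by (auto simp: in_set_conv_nth)
  have mn: "\<forall>z\<in>set xs. dep (ap l) \<le> dep z" using apex_min(2)[OF l] xs(3) by blast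
  have apV: "ap l \<in> V" using apex_min(1)[OF l] Vl_subset_nonempty(1)[OF l] by blast
  let ?ys1 = "drop k xs" and ?ys2 = "rev (take (Suc k) xs)"
  have p1: "is_path E ?ys1" using is_path_drop xs k by blast
  have p2: "is_path E ?ys2" using is_path_rev is_path_take xs by blast
  have h1: "hd ?ys1 = ap l" using k by (simp add: hd_drop_conv_nth)
  have h2: "hd ?ys2 = ap l"
  proof -
    have "hd ?ys2 = last (take (Suc k) xs)" by (simp add: hd_rev)
    also have "\<dots> = xs ! k" using last_take_drop[of 0 k xs] k by simp
    finally show ?thesis using k by simp
  qed
  have s1: "set ?ys1 \<subseteq> set xs" by (rule set_drop_subset)
  have s2: "set ?ys2 \<subseteq> set xs" by (simp add: set_take_subset)
  have a1: "\<forall>z\<in>set ?ys1. anc (ap l) z" using path_anc_hd[OF p1] h1 apV mn s1 by auto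
  have a2: "\<forall>z\<in>set ?ys2. anc (ap l) z" using path_anc_hd[OF p2] h2 apV mn s2 by auto
  have "set xs = set (take (Suc k) xs) \<union> set (drop (Suc k) xs)" by (metis append_take_drop_id set_append)
  also have "\<dots> \<subseteq> set (take (Suc k) xs) \<union> set (drop k xs)"
  proof -
    have "set (drop (Suc k) xs) \<subseteq> set (drop k xs)" by (rule set_drop_subset_set_drop) simp
    then show ?thesis by blast
  qed
  finally have "set xs \<subseteq> set (take (Suc k) xs) \<union> set (drop k xs)" .
  then show ?thesis using a1 a2 z xs(3) by auto
qed

lemma link_convex: assumes l: "is_link l" and x: "x \<in> Vl E l" and y: "y \<in> Vl E l"
  and xz: "anc x z" and zy: "anc z y" shows "z \<in> Vl E l"
proof -
  obtain xs where xs: "is_path E xs" "hd xs \<in> V" "Vl E l = set xs" "Pl E l = path_edges xs"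
    using link_path l by blast
  have yV: "y \<in> V" using Vl_subset_nonempty l y by blast
  have "z \<in> set (tp x y)" using set_tp_vertical[OF anc_trans[OF xz zy yV] yV] xz zy by simp
  then show ?thesis using set_tp_subset[OF xs(1,2)] x y xs(3) by blast
qed

lemma parent_apex_notin: assumes l: "is_link l" and hr: "ap l \<noteq> r" shows "parent (ap l) \<notin> Vl E l"
proof
  assume a: "parent (ap l) \<in> Vl E l"
  have hV: "ap l \<in> V" using apex_min Vl_subset_nonempty l by blast
  have "anc (ap l) (parent (ap l))" using apex_anc l a by blast
  moreover have "anc (parent (ap l)) (ap l)" using parent_props hV hr by blast
  ultimately have "parent (ap l) = ap l" using anc_antisym[of "parent (ap l)" "ap l"] hV by blast
  then show False using parent_props(5)[OF hV hr] by blast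
qed

lemma Pl_char: assumes l: "is_link l"
  shows "e \<in> Pl E l \<longleftrightarrow> (\<exists>z\<in>Vl E l. z \<noteq> ap l \<and> z \<noteq> r \<and> e = {z, parent z})"
proof -
  obtain xs where xs: "is_path E xs" "hd xs \<in> V" "Vl E l = set xs" "Pl E l = path_edges xs"
    using link_path l by blast
  have sV: "set xs \<subseteq> V" using is_path_set_subset xs by simp
  show ?thesis
  proof
    assume "e \<in> Pl E l"
    then obtain i where i: "Suc i < length xs" "e = {xs ! i, xs ! Suc i}" using xs(4) by (auto simp: path_edges_def)
    have eE: "e \<in> E" using xs(1) i unfolding is_path_def by auto
    have inV: "xs ! i \<in> Vl E l" "xs ! Suc i \<in> Vl E l" using i xs(3) by auto
    have child: "z \<noteq> ap l" if "z \<in> Vl E l" "z \<noteq> r" "parent z \<in> Vl E l" for z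
    proof
      assume "z = ap l"
      then show False using parent_apex_notin l that by blast
    qed
    have "{xs ! i, xs ! Suc i} \<in> E" using eE i by simp
    from edge_parent[OF this]
    show "\<exists>z\<in>Vl E l. z \<noteq> ap l \<and> z \<noteq> r \<and> e = {z, parent z}"
    proof (elim disjE conjE)
      assume "xs ! Suc i \<noteq> r" "xs ! i = parent (xs ! Suc i)"
      then show ?thesis using child inV i by (intro bexI[of _ "xs ! Suc i"]) (auto simp: insert_commute)
    next
      assume "xs ! i \<noteq> r" "xs ! Suc i = parent (xs ! i)"
      then show ?thesis using child inV i by (intro bexI[of _ "xs ! i"]) auto
    qed
  next
    assume "\<exists>z\<in>Vl E l. z \<noteq> ap l \<and> z \<noteq> r \<and> e = {z, parent z}"
    then obtain z where z: "z \<in> Vl E l" "z \<noteq> ap l" "z \<noteq> r" "e = {z, parent z}" by blast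
    have zV: "z \<in> V" using z sV xs by blast
    have hz: "anc (ap l) z" using apex_anc l z by blast
    have "anc (ap l) (parent z)" using anc_parent zV hz z by blast
    moreover have "anc (parent z) z" using parent_props zV z by blast
    ultimately have pz: "parent z \<in> Vl E l" using link_convex[OF l apex_min(1)[OF l] z(1)] by blast
    have "{parent z, z} \<in> E" using parent_props zV z by blast
    then have "{parent z, z} \<in> path_edges xs" using edge_in_path_edges[OF xs(1,2)] pz z xs(3) by blast
    then show "e \<in> Pl E l" using z xs(4) by (simp add: insert_commute)
  qed
qed

lemma parent_edge_inj: assumes "z \<in> V" "z \<noteq> r" "z' \<in> V" "z' \<noteq> r" "{z, parent z} = {z', parent z'}"
  shows "z = z'"
proof (rule ccontr)
  assume ne: "z \<noteq> z'"
  then have e: "z = parent z'" "z' = parent z" using assms(5) by (auto simp: doubleton_eq_iff)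
  have "dep z = dep z' - 1" using e(1) parent_props(3)[OF assms(3,4)] by simp
  moreover have "dep z' = dep z - 1" using e(2) parent_props(3)[OF assms(1,2)] by simp
  moreover have "0 < dep z" "0 < dep z'" using dep_pos assms by auto
  ultimately show False by simp
qed

lemma up_top_bot: assumes "t \<noteq> b" "anc t b" "b \<in> V"
  shows "up_top E r {t,b} = t" "up_bot E r {t,b} = b"
proof -
  have uq: "t' = t \<and> b' = b" if "{t,b} = {t',b'}" "t' \<noteq> b'" "anc t' b'" for t' b'
  proof -
    have "(t' = t \<and> b' = b) \<or> (t' = b \<and> b' = t)" using that(1) by (auto simp: doubleton_eq_iff)
    moreover have "\<not> (t' = b \<and> b' = t)"
    proof
      assume "t' = b \<and> b' = t"
      then have "anc b t" using that by simp
      then show False using anc_antisym assms by blast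
    qed
    ultimately show ?thesis by blast
  qed
  show "up_top E r {t,b} = t" unfolding up_top_def
    by (rule the_equality) (use assms uq in blast)+
  show "up_bot E r {t,b} = b" unfolding up_bot_def
    by (rule the_equality) (use assms uq in blast)+
qed

lemma up_link_facts: assumes "t \<noteq> b" "anc t b" "b \<in> V"
  shows "is_link {t,b}" "Vl E {t,b} = {z. anc t z \<and> anc z b}" "ap {t,b} = t"
proof -
  have tV: "t \<in> V" using anc_V assms by blast
  show l: "is_link {t,b}" using tV assms unfolding is_link_def by blast
  show vs: "Vl E {t,b} = {z. anc t z \<and> anc z b}" using Vl_pair tV assms set_tp_vertical by simp
  have "t \<in> Vl E {t,b}" using vs anc_refl tV assms by simp
  then have "anc (ap {t,b}) t" using apex_anc l by blast
  moreover have "anc t (ap {t,b})" using apex_min(1)[OF l] vs by simp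
  ultimately show "ap {t,b} = t" using anc_antisym tV by blast
qed

definition vertex_at :: "'v \<Rightarrow> nat \<Rightarrow> 'v" where "vertex_at b d = tp r b ! (d - 1)"
definition edge_at :: "'v \<Rightarrow> nat \<Rightarrow> 'v set" where "edge_at b d = {vertex_at b d, parent (vertex_at b d)}"

lemma vertex_at_props: assumes b: "b \<in> V" and d: "1 \<le> d" "d \<le> dep b"
  shows "anc (vertex_at b d) b" "dep (vertex_at b d) = d" "vertex_at b d \<in> V"
proof -
  have l: "length (tp r b) = dep b" by (simp add: depth_def)
  have i: "d - 1 < length (tp r b)" using d l by simp
  show a: "anc (vertex_at b d) b" unfolding vertex_at_def ancestor_def using i by simp
  have "tp r (vertex_at b d) = take (Suc (d - 1)) (tp r b)" unfolding vertex_at_def using tp_prefix[OF b i] .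
  then show "dep (vertex_at b d) = d" using d by (simp add: depth_def)
  show "vertex_at b d \<in> V" using anc_V[OF b a] .
qed

lemma vertex_at_dep: "b \<in> V \<Longrightarrow> anc z b \<Longrightarrow> vertex_at b (dep z) = z"
  unfolding vertex_at_def using anc_nth by blast

lemma vertex_at_anc: assumes b: "b \<in> V" and d: "1 \<le> d1" "d1 \<le> d2" "d2 \<le> dep b"
  shows "anc (vertex_at b d1) (vertex_at b d2)"
proof -
  have "anc (vertex_at b d1) b" "anc (vertex_at b d2) b" "dep (vertex_at b d1) = d1" "dep (vertex_at b d2) = d2"
    using vertex_at_props[OF b] d by auto
  then show ?thesis using anc_if_dep_le[OF _ _ b] d by simp
qed

lemma vertex_at_not_root: assumes b: "b \<in> V" and d: "2 \<le> d" "d \<le> dep b" shows "vertex_at b d \<noteq> r"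
  using vertex_at_props[OF b, of d] d dep_root by auto

lemma parent_vertex_at: assumes b: "b \<in> V" and d: "2 \<le> d" "d \<le> dep b"
  shows "parent (vertex_at b d) = vertex_at b (d - 1)"
proof -
  let ?z = "vertex_at b d"
  have z: "anc ?z b" "dep ?z = d" "?z \<in> V" using vertex_at_props[OF b] d by auto
  have zr: "?z \<noteq> r" using vertex_at_not_root b d by blast
  have "anc (parent ?z) b" using anc_trans[OF parent_props(2)[OF z(3) zr] z(1) b] .
  moreover have "dep (parent ?z) = d - 1" using parent_props(3)[OF z(3) zr] z by simp
  ultimately show ?thesis using vertex_at_dep[OF b] by metis
qed

lemma anc_dep_less: assumes "anc x y" "x \<noteq> y" "y \<in> V" shows "dep x < dep y"
  using anc_dep_le[OF assms(3,1)] anc_eq[OF assms(3,1)] assms(2) by fastforce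

end

section \<open>Sources and directed paths\<close>

lemma rtrancl_from_source_if_preds_unique:
  assumes src: "\<And>z. (z, rt) \<notin> R" and pred: "\<And>x x' y. (x, y) \<in> R \<Longrightarrow> (x', y) \<in> R \<Longrightarrow> x = x'"
    and y: "(rt, y) \<in> (R \<union> R\<inverse>)\<^sup>*"
  shows "(rt, y) \<in> R\<^sup>*"
  using y
proof (induction rule: rtrancl_induct)
  case (step y z)
  show ?case
  proof (cases "(y, z) \<in> R")
    case False
    then have zy: "(z, y) \<in> R" using step(2) by blast
    then have "y \<noteq> rt" using src by blast
    then have "(rt, y) \<in> R\<^sup>+" using step.IH rtranclD by metis
    then obtain w where "(rt, w) \<in> R\<^sup>*" "(w, y) \<in> R" by (meson tranclD2)
    then show ?thesis using pred[OF _ zy] by blast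
  qed (use step.IH in simp)
qed simp

definition path_vertex :: "'b \<Rightarrow> ('a \<times> 'b \<times> 'b) list \<Rightarrow> nat \<Rightarrow> 'b" where
  "path_vertex x as k = (if k = 0 then x else arc_head (as ! (k - 1)))"

lemma dir_path_nth:
  assumes H: "dir_path A x y as" and k: "k < length as"
  shows "as ! k \<in> A" "as ! k = (fst (as ! k), path_vertex x as k, path_vertex x as (Suc k))"
proof -
  show "as ! k \<in> A" using H k nth_mem unfolding dir_path_def by blast
  have ne: "as \<noteq> []" using k by auto
  have d: "arc_tail (hd as) = x" "\<forall>i. Suc i < length as \<longrightarrow> arc_head (as ! i) = arc_tail (as ! Suc i)"
    using H ne unfolding dir_path_def by auto
  have "arc_tail (as ! k) = path_vertex x as k"
    using d ne k by (cases k) (auto simp: path_vertex_def hd_conv_nth)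
  then show "as ! k = (fst (as ! k), path_vertex x as k, path_vertex x as (Suc k))"
    by (cases "as ! k") (simp add: path_vertex_def arc_tail_def arc_head_def)
qed

lemma dir_path_last_vertex:
  assumes "dir_path A x y as"
  shows "path_vertex x as (length as) = y"
  using assms by (cases "as = []") (auto simp: dir_path_def path_vertex_def last_conv_nth)

lemma dir_path_vertex_inj:
  assumes H: "dir_path A x y as" and ij: "i \<le> length as" "j \<le> length as"
    and eq: "path_vertex x as i = path_vertex x as j"
  shows "i = j"
proof -
  have nth: "(x # map arc_head as) ! k = path_vertex x as k" if "k \<le> length as" for k
    using that by (cases k) (auto simp: path_vertex_def)
  have "distinct (x # map arc_head as)" using H unfolding dir_path_def by blast
  then show ?thesis using nth_eq_iff_index_eq[of "x # map arc_head as" i j] ij eq nth by simp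
qed

section \<open>The dependency graph\<close>

locale dependency_graph = rooted_tree V E r for V :: "'v set" and E r +
  fixes L F U :: "'v set set" and Fu :: "'v set \<Rightarrow> 'v set set"
  assumes links: "L \<subseteq> {{a, b} | a b. a \<in> V \<and> b \<in> V \<and> a \<noteq> b}"
    and F_sub: "F \<subseteq> L"
    and U_sub: "U \<subseteq> L_up E r L"
    and U_disj: "\<forall>u1\<in>U. \<forall>u2\<in>U. u1 \<noteq> u2 \<longrightarrow> Pl E u1 \<inter> Pl E u2 = {}"
    and Fu_choice: "\<forall>u\<in>L_up E r L. Fu_ok E r F u (Fu u)"
begin

abbreviation "Lup \<equiv> L_up E r L"

lemma L_link: "x \<in> L \<Longrightarrow> is_link x"
  using links unfolding is_link_def by blast

lemma F_link: "x \<in> F \<Longrightarrow> is_link x"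
  using F_sub L_link by blast

lemma finite_L: "finite L"
proof -
  have "L \<subseteq> Pow V" using links by auto
  then show ?thesis using finite_V finite_subset by blast
qed

lemma finite_F: "finite F" using finite_L F_sub finite_subset by blast
lemma U_subset_L: "U \<subseteq> L" using U_sub unfolding L_up_def by blast
lemma finite_U: "finite U" using finite_L U_subset_L by (rule finite_subset[rotated])

lemma up_linkE: assumes "u \<in> Lup"
  obtains t b where "u = {t,b}" "t \<noteq> b" "anc t b" "b \<in> V" "t \<in> V" "up_top E r u = t" "up_bot E r u = b"
proof -
  obtain t b where tb: "u = {t,b}" "t \<noteq> b" "anc t b" using assms unfolding L_up_def is_up_link_def by blast
  have "u \<in> L" using assms unfolding L_up_def by blast
  then have "b \<in> V" using links tb by (auto simp: doubleton_eq_iff)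
  moreover then have "t \<in> V" using anc_V tb by blast
  ultimately show ?thesis using that tb up_top_bot by blast
qed

lemma apex_in_V: "x \<in> F \<Longrightarrow> ap x \<in> V"
  using apex_min Vl_subset_nonempty F_link by blast

abbreviation "tu u \<equiv> up_top E r u"
abbreviation "bu u \<equiv> up_bot E r u"

text \<open>For an up-link \<open>u = {t, b}\<close> the edges of \<open>P\<^sub>u\<close> are the \<open>edge_at b d\<close> with
  \<open>depth_lo u \<le> d \<le> depth_hi u\<close>.  Identifying each edge with its depth makes \<open>F\<^sub>u\<close> a minimal cover of
  this interval by the intervals \<open>depths u x\<close>; \<open>Pul\<close>, \<open>prec_u\<close> and \<open>A_u\<close> then become \<open>own\<close>,
  \<open>before\<close> and \<open>consec\<close> of that cover.\<close>
definition depth_lo where "depth_lo u = Suc (dep (tu u))"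
definition depth_hi where "depth_hi u = dep (bu u)"
definition depths where "depths u x = {d. depth_lo u \<le> d \<and> d \<le> depth_hi u \<and> edge_at (bu u) d \<in> Pl E x}"

lemma up_link_props: assumes u: "u \<in> Lup"
  shows "u = {tu u, bu u}" "tu u \<noteq> bu u" "anc (tu u) (bu u)" "bu u \<in> V" "tu u \<in> V"
    "depth_lo u = Suc (dep (tu u))" "depth_hi u = dep (bu u)" "is_link u" "1 \<le> dep (tu u)"
proof -
  obtain t b where tb: "u = {t,b}" "t \<noteq> b" "anc t b" "b \<in> V" "t \<in> V" "up_top E r u = t" "up_bot E r u = b"
    using up_linkE u by blast
  then show "u = {tu u, bu u}" "tu u \<noteq> bu u" "anc (tu u) (bu u)" "bu u \<in> V" "tu u \<in> V" by auto
  show "depth_lo u = Suc (dep (tu u))" "depth_hi u = dep (bu u)" by (auto simp: depth_lo_def depth_hi_def)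
  show "is_link u" using up_link_facts tb by blast
  show "1 \<le> dep (tu u)" using dep_pos tb by (simp add: Suc_le_eq)
qed


lemma Pl_up_link: assumes "u = {t,b}" "t \<noteq> b" "anc t b" "b \<in> V"
  shows "e \<in> Pl E u \<longleftrightarrow> (\<exists>d. dep t < d \<and> d \<le> dep b \<and> e = edge_at b d)"
proof -
  note uf = up_link_facts[OF assms(2-4)]
  have tV: "t \<in> V" using anc_V assms by blast
  have dt: "1 \<le> dep t" using dep_pos tV by (simp add: Suc_le_eq)
  show ?thesis
  proof
    assume "e \<in> Pl E u"
    then obtain z where z: "z \<in> Vl E u" "z \<noteq> ap u" "z \<noteq> r" "e = {z, parent z}" using Pl_char uf assms by blast
    have zz: "anc t z" "anc z b" "z \<noteq> t" using z uf assms by auto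
    have zV: "z \<in> V" using anc_V zz assms by blast
    have "dep t < dep z" using anc_dep_less zz zV by blast
    moreover have "dep z \<le> dep b" using anc_dep_le zz assms by blast
    moreover have "z = vertex_at b (dep z)" using vertex_at_dep zz assms by simp
    ultimately show "\<exists>d. dep t < d \<and> d \<le> dep b \<and> e = edge_at b d" using z(4) unfolding edge_at_def by metis
  next
    assume "\<exists>d. dep t < d \<and> d \<le> dep b \<and> e = edge_at b d"
    then obtain d where d: "dep t < d" "d \<le> dep b" "e = edge_at b d" by blast
    let ?z = "vertex_at b d"
    have zp: "anc ?z b" "dep ?z = d" using vertex_at_props assms d dt by auto
    have "vertex_at b (dep t) = t" using vertex_at_dep assms by blast
    then have "anc t ?z" using vertex_at_anc[OF assms(4) dt, of d] d by simp
    moreover have "?z \<noteq> t" using zp d by auto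
    moreover have "?z \<noteq> r" using vertex_at_not_root assms d dt by simp
    ultimately show "e \<in> Pl E u" using Pl_char uf assms zp d unfolding edge_at_def by auto
  qed
qed

lemma edge_at_in_Pl_iff: assumes x: "is_link x" and b: "b \<in> V" and d: "2 \<le> d" "d \<le> dep b"
  shows "edge_at b d \<in> Pl E x \<longleftrightarrow> vertex_at b d \<in> Vl E x \<and> vertex_at b d \<noteq> ap x"
proof -
  have zV: "vertex_at b d \<in> V" "vertex_at b d \<noteq> r" using vertex_at_props vertex_at_not_root b d by auto
  show ?thesis
  proof
    assume "edge_at b d \<in> Pl E x"
    then obtain z where z: "z \<in> Vl E x" "z \<noteq> ap x" "z \<noteq> r" "edge_at b d = {z, parent z}" using Pl_char x by blast
    have "z \<in> V" using Vl_subset_nonempty x z by blast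
    then have "z = vertex_at b d" using parent_edge_inj zV z unfolding edge_at_def by metis
    then show "vertex_at b d \<in> Vl E x \<and> vertex_at b d \<noteq> ap x" using z by simp
  next
    assume "vertex_at b d \<in> Vl E x \<and> vertex_at b d \<noteq> ap x"
    then show "edge_at b d \<in> Pl E x" using Pl_char x zV unfolding edge_at_def by blast
  qed
qed

abbreviation "consec_in u \<equiv> interval_cover.consec (depth_lo u) (depth_hi u) (Fu u) (depths u)"
abbreviation "before_in u \<equiv> interval_cover.before (depth_lo u) (depth_hi u) (Fu u) (depths u)"
abbreviation "own_in u \<equiv> interval_cover.own (depth_lo u) (depth_hi u) (Fu u) (depths u)"
abbreviation "lo_in u \<equiv> interval_cover.lo (depths u)"
abbreviation "hi_in u \<equiv> interval_cover.hi (depths u)"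

lemma Fu_ok_props: assumes "u \<in> Lup"
  shows "Fu u \<subseteq> Bset E r F (v_of E r F u)" "Pl E u \<subseteq> (\<Union>l\<in>Fu u. Pl E l)"
    "\<And>S'. S' \<subset> Fu u \<Longrightarrow> \<not> Pl E u \<subseteq> (\<Union>l\<in>S'. Pl E l)"
  using Fu_choice assms unfolding Fu_ok_def by blast+

lemma Fu_subset_F: "u \<in> Lup \<Longrightarrow> Fu u \<subseteq> F"
  using Fu_ok_props(1) unfolding Bset_def by blast

lemma depths_convex:
  assumes u: "u \<in> Lup" and xl: "is_link x"
    and ijk: "i \<in> depths u x" "k \<in> depths u x" "i \<le> j" "j \<le> k"
  shows "j \<in> depths u x"
proof -
  note U = up_link_props[OF u]
  let ?b = "bu u"
  have r: "2 \<le> i" "i \<le> dep ?b" "2 \<le> k" "k \<le> dep ?b" using ijk U by (auto simp: depths_def)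
  have ci: "vertex_at ?b i \<in> Vl E x" "vertex_at ?b i \<noteq> ap x"
    using ijk(1) edge_at_in_Pl_iff[OF xl U(4)] r by (auto simp: depths_def)
  have ck: "vertex_at ?b k \<in> Vl E x" using ijk edge_at_in_Pl_iff[OF xl U(4)] r by (auto simp: depths_def)
  have a1: "anc (vertex_at ?b i) (vertex_at ?b j)" using vertex_at_anc[OF U(4)] r ijk by simp
  have a2: "anc (vertex_at ?b j) (vertex_at ?b k)" using vertex_at_anc[OF U(4)] r ijk by simp
  have cj: "vertex_at ?b j \<in> Vl E x" using link_convex[OF xl ci(1) ck a1 a2] .
  have nj: "vertex_at ?b j \<noteq> ap x"
  proof
    assume e: "vertex_at ?b j = ap x"
    have "anc (vertex_at ?b j) (vertex_at ?b i)" using apex_anc[OF xl ci(1)] e by simp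
    then have "j \<le> i" using anc_dep_le vertex_at_props[OF U(4)] r ijk
      by (metis le_trans one_le_numeral)
    then show False using ci e ijk by simp
  qed
  show ?thesis using ijk cj nj edge_at_in_Pl_iff[OF xl U(4)] r by (auto simp: depths_def)
qed

lemma Pl_up_link_subset_iff:
  assumes u: "u \<in> Lup"
  shows "Pl E u \<subseteq> (\<Union>x\<in>S. Pl E x) \<longleftrightarrow> {depth_lo u..depth_hi u} \<subseteq> \<Union>(depths u ` S)"
proof -
  note U = up_link_props[OF u]
  have "Pl E u = edge_at (bu u) ` {depth_lo u..depth_hi u}"
    unfolding set_eq_iff Pl_up_link[OF U(1-4)] U(6,7) by (auto simp: Suc_le_eq)
  then show ?thesis unfolding depths_def by (auto simp: subset_iff)
qed

lemma interval_cover_up_link: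
  assumes u: "u \<in> Lup"
  shows "interval_cover (depth_lo u) (depth_hi u) (Fu u) (depths u)"
proof
  show "finite (Fu u)" using Fu_subset_F u finite_F finite_subset by blast
  show "\<And>x. x \<in> Fu u \<Longrightarrow> depths u x \<subseteq> {depth_lo u..depth_hi u}" unfolding depths_def by auto
  show "\<And>x i j k. x \<in> Fu u \<Longrightarrow> i \<in> depths u x \<Longrightarrow> k \<in> depths u x \<Longrightarrow> i \<le> j \<Longrightarrow> j \<le> k
          \<Longrightarrow> j \<in> depths u x"
    using depths_convex[OF u] F_link Fu_subset_F[OF u] by blast
  show "{depth_lo u..depth_hi u} \<subseteq> \<Union>(depths u ` Fu u)"
    using Fu_ok_props(2)[OF u] Pl_up_link_subset_iff[OF u] by blast
  show "\<And>S'. S' \<subset> Fu u \<Longrightarrow> \<not> {depth_lo u..depth_hi u} \<subseteq> \<Union>(depths u ` S')"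
    using Fu_ok_props(3)[OF u] Pl_up_link_subset_iff[OF u] by blast
qed

lemma dep_le_v_of:
  assumes u: "u \<in> Lup" and w: "anc w (tu u)" "Pl E u \<subseteq> (\<Union>l\<in>Bset E r F w. Pl E l)"
  shows "dep w \<le> dep (v_of E r F u)"
  unfolding v_of_def
proof (rule arg_max_nat_le)
  show "anc w (tu u) \<and> Pl E u \<subseteq> (\<Union>l\<in>Bset E r F w. Pl E l)" using w by blast
  show "\<forall>y. anc y (tu u) \<and> Pl E u \<subseteq> (\<Union>l\<in>Bset E r F y. Pl E l) \<longrightarrow> dep y < Suc (dep (tu u))"
    using anc_dep_le up_link_props(5)[OF u] by (simp add: less_Suc_eq_le)
qed

lemma up_link_path_edges:
  assumes u: "u \<in> Lup"
  shows "length (tp (tu u) (bu u)) = Suc (dep (bu u) - dep (tu u))"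
    and "Suc i < length (tp (tu u) (bu u)) \<Longrightarrow>
      {tp (tu u) (bu u) ! i, tp (tu u) (bu u) ! Suc i} = edge_at (bu u) (dep (tu u) + Suc i)"
proof -
  note U = up_link_props[OF u]
  let ?t = "tu u" and ?b = "bu u"
  have xs: "tp ?t ?b = drop (dep ?t - 1) (tp r ?b)" using tp_vertical U by blast
  show len: "length (tp ?t ?b) = Suc (dep ?b - dep ?t)"
    using xs U(9) anc_dep_le[OF U(4,3)] by (simp add: depth_def)
  have nth: "tp ?t ?b ! i = vertex_at ?b (dep ?t + i)" if "i < length (tp ?t ?b)" for i
    using that xs U(9) by (simp add: vertex_at_def add.commute)
  assume i: "Suc i < length (tp ?t ?b)"
  have "parent (vertex_at ?b (dep ?t + Suc i)) = vertex_at ?b (dep ?t + Suc i - 1)"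
    using parent_vertex_at[OF U(4)] i len U(9) by simp
  then show "{tp ?t ?b ! i, tp ?t ?b ! Suc i} = edge_at ?b (dep ?t + Suc i)"
    using nth i by (simp add: edge_at_def insert_commute)
qed

lemma own_in_range:
  assumes u: "u \<in> Lup" and d: "d \<in> own_in u l"
  shows "dep (tu u) < d" "d \<le> dep (bu u)"
  using d up_link_props[OF u] unfolding interval_cover.own_def[OF interval_cover_up_link[OF u]] by auto

lemma edge_at_in_Pul_iff:
  assumes u: "u \<in> Lup" and d: "dep (tu u) < d" "d \<le> dep (bu u)"
  shows "edge_at (bu u) d \<in> Pul E u (Fu u) l \<longleftrightarrow> d \<in> own_in u l"
proof -
  note U = up_link_props[OF u]
  have "edge_at (bu u) d \<in> Pl E u" using Pl_up_link[OF U(1-4)] d by blast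
  moreover have "edge_at (bu u) d \<in> Pl E l' \<longleftrightarrow> d \<in> depths u l'" for l'
    using d U by (auto simp: depths_def)
  ultimately show ?thesis
    using d U unfolding Pul_def interval_cover.own_def[OF interval_cover_up_link[OF u]] by auto
qed

lemma prec_u_iff_before:
  assumes u: "u \<in> Lup"
  shows "prec_u E r u (Fu u) l1 l2 \<longleftrightarrow> before_in u l1 l2"
proof -
  let ?t = "tu u" and ?b = "bu u"
  let ?xs = "tp ?t ?b"
  note len = up_link_path_edges(1)[OF u] and edge = up_link_path_edges(2)[OF u]
  have pu: "prec_u E r u (Fu u) l1 l2 \<longleftrightarrow>
     (\<forall>i j. Suc i < length ?xs \<and> Suc j < length ?xs \<and> {?xs ! i, ?xs ! Suc i} \<in> Pul E u (Fu u) l1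
        \<and> {?xs ! j, ?xs ! Suc j} \<in> Pul E u (Fu u) l2 \<longrightarrow> i < j)"
    unfolding prec_u_def Let_def by (rule refl)
  show ?thesis
  proof
    assume p: "prec_u E r u (Fu u) l1 l2"
    show "before_in u l1 l2" unfolding interval_cover.before_def[OF interval_cover_up_link[OF u]]
    proof (intro ballI)
      fix d1 d2 assume d1: "d1 \<in> own_in u l1" and d2: "d2 \<in> own_in u l2"
      note r1 = own_in_range[OF u d1] and r2 = own_in_range[OF u d2]
      define i where "i = d1 - Suc (dep ?t)"
      define j where "j = d2 - Suc (dep ?t)"
      have ij: "Suc i < length ?xs" "Suc j < length ?xs" "dep ?t + Suc i = d1" "dep ?t + Suc j = d2"
        using r1 r2 len by (auto simp: i_def j_def)
      have "{?xs ! i, ?xs ! Suc i} \<in> Pul E u (Fu u) l1"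
        using edge[OF ij(1)] ij(3) edge_at_in_Pul_iff[OF u r1] d1 by simp
      moreover have "{?xs ! j, ?xs ! Suc j} \<in> Pul E u (Fu u) l2"
        using edge[OF ij(2)] ij(4) edge_at_in_Pul_iff[OF u r2] d2 by simp
      ultimately have "i < j" using p pu ij by blast
      then show "d1 < d2" using ij by simp
    qed
  next
    assume p: "before_in u l1 l2"
    show "prec_u E r u (Fu u) l1 l2" unfolding pu
    proof (intro allI impI)
      fix i j assume a: "Suc i < length ?xs \<and> Suc j < length ?xs
        \<and> {?xs ! i, ?xs ! Suc i} \<in> Pul E u (Fu u) l1 \<and> {?xs ! j, ?xs ! Suc j} \<in> Pul E u (Fu u) l2"
      have r: "dep ?t < dep ?t + Suc i" "dep ?t + Suc i \<le> dep ?b"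
        "dep ?t < dep ?t + Suc j" "dep ?t + Suc j \<le> dep ?b" using a len by auto
      have "dep ?t + Suc i \<in> own_in u l1" using a edge edge_at_in_Pul_iff[OF u r(1,2)] by metis
      moreover have "dep ?t + Suc j \<in> own_in u l2" using a edge edge_at_in_Pul_iff[OF u r(3,4)] by metis
      ultimately have "dep ?t + Suc i < dep ?t + Suc j"
        using p unfolding interval_cover.before_def[OF interval_cover_up_link[OF u]] by blast
      then show "i < j" by simp
    qed
  qed
qed

lemma A_u_iff_consec: assumes u: "u \<in> Lup"
  shows "(x, y) \<in> A_u E r u (Fu u) \<longleftrightarrow> consec_in u x y"
  unfolding A_u_def interval_cover.consec_def[OF interval_cover_up_link[OF u]] using prec_u_iff_before[OF u] by simp

lemma lo_in_props: assumes u: "u \<in> Lup" and x: "x \<in> Fu u"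
  shows "Suc (dep (tu u)) \<le> lo_in u x" "lo_in u x \<le> dep (bu u)"
    "vertex_at (bu u) (lo_in u x) \<in> Vl E x" "vertex_at (bu u) (lo_in u x) \<noteq> ap x"
    "anc (ap x) (vertex_at (bu u) (lo_in u x - 1))"
proof -
  interpret ic: interval_cover "depth_lo u" "depth_hi u" "Fu u" "depths u" using interval_cover_up_link[OF u] .
  note U = up_link_props[OF u]
  have xl: "is_link x" using x Fu_subset_F u F_link by blast
  have lo: "ic.lo x \<in> depths u x" using ic.D_interval[OF x] by auto
  then show r1: "Suc (dep (tu u)) \<le> lo_in u x" "lo_in u x \<le> dep (bu u)" using U by (auto simp: depths_def)
  have c: "vertex_at (bu u) (lo_in u x) \<in> Vl E x \<and> vertex_at (bu u) (lo_in u x) \<noteq> ap x"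
    using lo edge_at_in_Pl_iff[OF xl U(4)] r1 U(9) by (simp add: depths_def)
  then show "vertex_at (bu u) (lo_in u x) \<in> Vl E x" "vertex_at (bu u) (lo_in u x) \<noteq> ap x" by auto
  have zV: "vertex_at (bu u) (lo_in u x) \<in> V" using vertex_at_props U r1 by simp
  have "anc (ap x) (vertex_at (bu u) (lo_in u x))" using apex_anc xl c by blast
  moreover have "ap x \<noteq> vertex_at (bu u) (lo_in u x)" using c by metis
  ultimately have "anc (ap x) (parent (vertex_at (bu u) (lo_in u x)))" using anc_parent[OF zV] by blast
  then show "anc (ap x) (vertex_at (bu u) (lo_in u x - 1))" using parent_vertex_at[OF U(4)] r1 U(9) by simp
qed

lemma apex_if_lo_in_gt: assumes u: "u \<in> Lup" and x: "x \<in> Fu u" and gt: "depth_lo u < lo_in u x"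
  shows "ap x = vertex_at (bu u) (lo_in u x - 1)" "dep (ap x) = lo_in u x - 1"
    "anc (tu u) (ap x)" "tu u \<noteq> ap x" "anc (ap x) (bu u)"
proof -
  interpret ic: interval_cover "depth_lo u" "depth_hi u" "Fu u" "depths u" using interval_cover_up_link[OF u] .
  note U = up_link_props[OF u]
  note lf = lo_in_props[OF u x]
  have xl: "is_link x" using x Fu_subset_F u F_link by blast
  let ?b = "bu u" and ?d = "lo_in u x - 1"
  have dr: "2 \<le> ?d" "?d \<le> dep ?b" "Suc (dep (tu u)) \<le> ?d" using gt U lf by auto
  have zV: "vertex_at ?b ?d \<in> V" using vertex_at_props U dr by simp
  have "vertex_at ?b ?d \<in> Vl E x"
  proof -
    have "anc (vertex_at ?b ?d) (vertex_at ?b (lo_in u x))" using vertex_at_anc[OF U(4)] dr lf by simp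
    then show ?thesis using link_convex[OF xl apex_min(1)[OF xl] lf(3) lf(5)] by blast
  qed
  moreover have "\<not> (vertex_at ?b ?d \<in> Vl E x \<and> vertex_at ?b ?d \<noteq> ap x)"
  proof
    assume "vertex_at ?b ?d \<in> Vl E x \<and> vertex_at ?b ?d \<noteq> ap x"
    then have "?d \<in> depths u x" using edge_at_in_Pl_iff[OF xl U(4)] dr U by (simp add: depths_def)
    then have "ic.lo x \<le> ?d" using ic.D_interval[OF x] by auto
    then show False using gt by simp
  qed
  ultimately show ap: "ap x = vertex_at ?b ?d" by metis
  show "dep (ap x) = lo_in u x - 1" using ap vertex_at_props U dr by simp
  have "vertex_at ?b (dep (tu u)) = tu u" using vertex_at_dep U by blast
  then have "anc (tu u) (vertex_at ?b ?d)" using vertex_at_anc[OF U(4) U(9), of ?d] dr by simp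
  then show "anc (tu u) (ap x)" using ap by simp
  show "tu u \<noteq> ap x" using ap vertex_at_props[OF U(4), of ?d] dr by auto
  show "anc (ap x) (bu u)" using ap vertex_at_props[OF U(4), of ?d] dr by auto
qed

text \<open>The interval of \<open>y\<close> begins at most one past the end of that of \<open>x\<close>, so the edge above \<open>ap y\<close>
  lies on \<open>P\<^sub>x\<close>.\<close>
lemma consec_in_props: assumes u: "u \<in> Lup" and c: "consec_in u x y"
  shows "x \<in> Fu u" "y \<in> Fu u" "x \<in> F" "y \<in> F"
    "ap y \<in> Vl E x" "anc (ap x) (ap y)" "ap x \<noteq> ap y"
    "ap y \<noteq> r" "{ap y, parent (ap y)} \<in> Pl E x" "{ap y, parent (ap y)} \<in> Pl E u"
    "anc (tu u) (ap y)" "tu u \<noteq> ap y" "anc (ap y) (bu u)"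
    "depth_lo u < lo_in u y"
proof -
  interpret ic: interval_cover "depth_lo u" "depth_hi u" "Fu u" "depths u" using interval_cover_up_link[OF u] .
  note U = up_link_props[OF u]
  have xy: "x \<in> Fu u" "y \<in> Fu u" "x \<noteq> y" "before_in u x y" using c unfolding ic.consec_def by auto
  then show "x \<in> Fu u" "y \<in> Fu u" "x \<in> F" "y \<in> F" using Fu_subset_F u by auto
  have xl: "is_link x" using xy Fu_subset_F u F_link by blast
  have l: "lo_in u x < lo_in u y" using ic.before_iff_lo_less xy by blast
  have l0: "depth_lo u \<le> lo_in u x" using ic.D_interval[OF xy(1)] by simp
  show gt: "depth_lo u < lo_in u y" using l l0 by simp
  note apy = apex_if_lo_in_gt[OF u xy(2) gt]
  have g: "lo_in u y \<le> Suc (hi_in u x)" using ic.consec_lo_le_Suc_hi c by blast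
  have "lo_in u y - 1 \<in> depths u x" using ic.D_interval[OF xy(1)] l g by auto
  then have inx: "edge_at (bu u) (lo_in u y - 1) \<in> Pl E x" by (simp add: depths_def)
  have dr: "2 \<le> lo_in u y - 1" "lo_in u y - 1 \<le> dep (bu u)" using gt U lo_in_props[OF u xy(2)] by auto
  have cx: "vertex_at (bu u) (lo_in u y - 1) \<in> Vl E x" "vertex_at (bu u) (lo_in u y - 1) \<noteq> ap x"
    using edge_at_in_Pl_iff[OF xl U(4) dr] inx by auto
  then show apyx: "ap y \<in> Vl E x" using apy by simp
  show "anc (ap x) (ap y)" using apex_anc xl apyx by blast
  show "ap x \<noteq> ap y" using cx apy by simp
  show "ap y \<noteq> r" using vertex_at_not_root U dr apy by simp
  show "{ap y, parent (ap y)} \<in> Pl E x" using inx apy by (simp add: edge_at_def)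
  have "dep (tu u) < lo_in u y - 1" using gt U by simp
  then have "edge_at (bu u) (lo_in u y - 1) \<in> Pl E u" using Pl_up_link[OF U(1-4)] dr by blast
  then show "{ap y, parent (ap y)} \<in> Pl E u" using apy by (simp add: edge_at_def)
  show "anc (tu u) (ap y)" "tu u \<noteq> ap y" "anc (ap y) (bu u)" using apy by auto
qed

lemma lo_in_eq_depth_lo: assumes u: "u \<in> Lup" and c: "consec_in u g q" and nb: "\<not> (anc (tu u) (ap g) \<and> tu u \<noteq> ap g)"
  shows "lo_in u g = depth_lo u"
proof -
  interpret ic: interval_cover "depth_lo u" "depth_hi u" "Fu u" "depths u" using interval_cover_up_link[OF u] .
  have g: "g \<in> Fu u" using c unfolding ic.consec_def by auto
  have "depth_lo u \<le> lo_in u g" using ic.D_interval[OF g] by simp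
  moreover have "\<not> depth_lo u < lo_in u g" using apex_if_lo_in_gt(3,4)[OF u g] nb by blast
  ultimately show ?thesis by simp
qed

abbreviation "arcs \<equiv> dep_arcs E r Fu U"
definition arc_rel where "arc_rel = {(x,y). \<exists>u. (u,x,y) \<in> arcs}"

lemma arc_props: assumes "(u,x,y) \<in> arcs" shows "u \<in> U" "u \<in> Lup" "consec_in u x y"
proof -
  have a: "u \<in> U" "(x,y) \<in> A_u E r u (Fu u)" using assms unfolding dep_arcs_def by auto
  then show "u \<in> U" "u \<in> Lup" using U_sub by auto
  then show "consec_in u x y" using A_u_iff_consec a by blast
qed

lemma arc_rel_props: assumes "(x,y) \<in> arc_rel"
  shows "x \<in> F" "y \<in> F" "ap y \<in> Vl E x" "anc (ap x) (ap y)" "ap x \<noteq> ap y" "dep (ap x) < dep (ap y)"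
proof -
  obtain u where a: "(u,x,y) \<in> arcs" using assms unfolding arc_rel_def by blast
  note c = consec_in_props[OF arc_props(2,3)[OF a]]
  show "x \<in> F" "y \<in> F" "ap y \<in> Vl E x" "anc (ap x) (ap y)" "ap x \<noteq> ap y" using c by auto
  show "dep (ap x) < dep (ap y)" using anc_dep_less c apex_in_V by blast
qed

lemma arc_rel_rtrancl: assumes "(x,y) \<in> arc_rel\<^sup>*" "x \<in> F" shows "y \<in> F" "anc (ap x) (ap y)" "dep (ap x) \<le> dep (ap y)"
proof -
  have "y \<in> F \<and> anc (ap x) (ap y)" using assms(1)
  proof (induction rule: rtrancl_induct)
    case base then show ?case using assms(2) anc_refl apex_in_V by blast
  next
    case (step y z)
    then show ?case using arc_rel_props[OF step(2)] anc_trans apex_in_V by blast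
  qed
  then show "y \<in> F" "anc (ap x) (ap y)" by auto
  then show "dep (ap x) \<le> dep (ap y)" using anc_dep_le apex_in_V by blast
qed

lemma arc_rel_trancl: assumes "(x,y) \<in> arc_rel\<^sup>+" shows "dep (ap x) < dep (ap y)" "x \<in> F" "y \<in> F"
proof -
  show "dep (ap x) < dep (ap y)" using assms
  proof (induction rule: trancl_induct)
    case (base y) then show ?case using arc_rel_props by blast
  next
    case (step y z) then show ?case using arc_rel_props(6)[OF step(2)] by simp
  qed
  show "x \<in> F" "y \<in> F" using assms by (induction rule: trancl_induct) (auto dest: arc_rel_props)
qed

lemma arc_rel_trancl_neq: "(x,y) \<in> arc_rel\<^sup>+ \<Longrightarrow> x \<noteq> y"
  using arc_rel_trancl by fastforce

lemma arcs_same_tail: assumes "(u,x,y) \<in> arcs" "(u',x,y') \<in> arcs" "y \<noteq> y'" shows "u \<noteq> u'"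
proof
  assume e: "u = u'"
  have u: "u \<in> Lup" using arc_props assms by blast
  interpret ic: interval_cover "depth_lo u" "depth_hi u" "Fu u" "depths u" using interval_cover_up_link[OF u] .
  have "consec_in u x y" "consec_in u x y'" using arc_props assms e by auto
  then show False using ic.consec_succ_unique assms(3) by blast
qed

lemma arcs_same_head: assumes "(u,x,y) \<in> arcs" "(u',x',y) \<in> arcs" shows "u = u'" "x = x'"
proof -
  have u: "u \<in> Lup" "u \<in> U" and u': "u' \<in> Lup" "u' \<in> U" using arc_props assms by auto
  have "{ap y, parent (ap y)} \<in> Pl E u" using consec_in_props(10)[OF u(1) arc_props(3)[OF assms(1)]] .
  moreover have "{ap y, parent (ap y)} \<in> Pl E u'" using consec_in_props(10)[OF u'(1) arc_props(3)[OF assms(2)]] .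
  ultimately show e: "u = u'" using U_disj u u' by blast
  interpret ic: interval_cover "depth_lo u" "depth_hi u" "Fu u" "depths u" using interval_cover_up_link[OF u(1)] .
  have "consec_in u x y" "consec_in u x' y" using arc_props assms e by auto
  then show "x = x'" using ic.consec_pred_unique by blast
qed

lemma arc_rel_pred_unique: "(x,y) \<in> arc_rel \<Longrightarrow> (x',y) \<in> arc_rel \<Longrightarrow> x = x'"
  unfolding arc_rel_def using arcs_same_head by blast

lemma parent_edge_in_up_link: assumes u: "u \<in> Lup" and z: "anc (tu u) z" "anc z (bu u)" "z \<noteq> tu u"
  shows "{z, parent z} \<in> Pl E u"
proof -
  note U = up_link_props[OF u]
  note uf = up_link_facts[OF U(2-4)]
  have zV: "z \<in> V" using anc_V z U by blast
  have zr: "z \<noteq> r"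
  proof
    assume "z = r"
    then have "anc (tu u) r" using z by simp
    then have "tu u = r" using anc_antisym[OF _ anc_root[OF U(5)] rV] by blast
    then show False using z \<open>z = r\<close> by simp
  qed
  have "z \<in> Vl E u" using uf U z by simp
  moreover have "z \<noteq> ap u" using uf U z by simp
  ultimately show ?thesis using Pl_char[OF U(8)] zr by blast
qed

lemma sibling_apex_anc_top:
  assumes as: "(us, g, s) \<in> arcs" and aq: "(uq, g, q) \<in> arcs" and sq: "s \<noteq> q"
    and aps: "anc (ap s) (ap q)"
  shows "anc (ap s) (tu uq)"
proof (rule ccontr)
  assume n: "\<not> anc (ap s) (tu uq)"
  have us: "us \<in> Lup" "us \<in> U" and uq: "uq \<in> Lup" "uq \<in> U" using arc_props as aq by auto
  note cs = consec_in_props[OF us(1) arc_props(3)[OF as]]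
  note cq = consec_in_props[OF uq(1) arc_props(3)[OF aq]]
  note U = up_link_props[OF uq(1)]
  have qV: "ap q \<in> V" using apex_in_V cq(4) by blast
  have "anc (tu uq) (ap s)" using anc_linear[OF cq(11) aps qV] n by blast
  moreover have "anc (ap s) (bu uq)" using anc_trans[OF aps cq(13) U(4)] .
  moreover have "ap s \<noteq> tu uq" using n anc_refl U by metis
  ultimately have "{ap s, parent (ap s)} \<in> Pl E uq" using parent_edge_in_up_link uq by metis
  moreover have "{ap s, parent (ap s)} \<in> Pl E us" using cs by blast
  moreover have "us \<noteq> uq" using arcs_same_tail as aq sq by blast
  ultimately show False using U_disj us uq by blast
qed

lemma up_link_covered_without_first:
  assumes u: "u \<in> Lup" and c: "consec_in u g q" and g0: "lo_in u g = depth_lo u"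
    and zF: "z \<in> F" and zt: "anc (ap z) (tu u)" and qz: "ap q \<in> Vl E z"
  shows "Pl E u \<subseteq> (\<Union>x\<in>insert z (Fu u - {g}). Pl E x)"
proof
  interpret ic: interval_cover "depth_lo u" "depth_hi u" "Fu u" "depths u"
    using interval_cover_up_link[OF u] .
  note U = up_link_props[OF u]
  let ?b = "bu u"
  fix e assume "e \<in> Pl E u"
  then obtain d where d: "dep (tu u) < d" "d \<le> dep ?b" "e = edge_at ?b d"
    using Pl_up_link[OF U(1-4)] by blast
  show "e \<in> (\<Union>x\<in>insert z (Fu u - {g}). Pl E x)"
  proof (cases "\<exists>x\<in>Fu u - {g}. d \<in> depths u x")
    case True
    then show ?thesis using d by (auto simp: depths_def)
  next
    case False
    have zl: "is_link z" using F_link zF by blast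
    have q: "q \<in> Fu u" "depth_lo u < lo_in u q" using consec_in_props[OF u c] by auto
    have "d \<in> own_in u g" using False d U unfolding ic.own_def by auto
    then have dl: "d < lo_in u q" using ic.own_less_lo_succ c by blast
    have d2: "2 \<le> d" using d U by simp
    have "anc (vertex_at ?b d) (vertex_at ?b (lo_in u q - 1))"
      using vertex_at_anc[OF U(4)] d dl d2 lo_in_props(2)[OF u q(1)] by simp
    then have a1: "anc (vertex_at ?b d) (ap q)" using apex_if_lo_in_gt(1)[OF u q] by simp
    have "anc (tu u) (vertex_at ?b d)"
      using vertex_at_anc[OF U(4) U(9), of d] vertex_at_dep[OF U(4,3)] d by simp
    then have a2: "anc (ap z) (vertex_at ?b d)" using anc_trans[OF zt] vertex_at_props U d2 d by simp
    have "dep (ap z) \<le> dep (tu u)" using anc_dep_le[OF U(5) zt] .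
    moreover have "dep (vertex_at ?b d) = d" using vertex_at_props[OF U(4)] d d2 by simp
    ultimately have "vertex_at ?b d \<noteq> ap z" using d by auto
    moreover have "vertex_at ?b d \<in> Vl E z" using link_convex[OF zl apex_min(1)[OF zl] qz a2 a1] .
    ultimately have "e \<in> Pl E z" using edge_at_in_Pl_iff[OF zl U(4) d2 d(2)] d by simp
    then show ?thesis by blast
  qed
qed

text \<open>Maximality of \<open>v\<^sub>u\<close>: a cover of \<open>P\<^sub>u\<close> by links of \<open>B\<^sub>w\<close> for an ancestor \<open>w\<close> of \<open>t\<close> forces
  \<open>dep w \<le> dep v\<^sub>u\<close>, and \<open>v\<^sub>u\<close> is an ancestor of every apex in \<open>F\<^sub>u\<close>.\<close>
lemma dep_le_apex_first_if_cover_from_top: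
  assumes u: "u \<in> Lup" and c: "consec_in u g q" and g0: "lo_in u g = depth_lo u"
    and zF: "z \<in> F" and zt: "anc (ap z) (tu u)" and qz: "ap q \<in> Vl E z"
    and wz: "anc w (ap z)" and wt: "anc w (tu u)"
  shows "dep w \<le> dep (ap g)"
proof -
  interpret ic: interval_cover "depth_lo u" "depth_hi u" "Fu u" "depths u"
    using interval_cover_up_link[OF u] .
  have g: "g \<in> Fu u" using consec_in_props[OF u c] by blast
  have "insert z (Fu u - {g}) \<subseteq> Bset E r F w"
  proof
    fix x assume x: "x \<in> insert z (Fu u - {g})"
    show "x \<in> Bset E r F w"
    proof (cases "x = z")
      case False
      then have xF: "x \<in> Fu u" "x \<noteq> g" using x by auto
      then have "depth_lo u < lo_in u x" using ic.lo_gt_if_first g g0 by blast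
      then have "anc (tu u) (ap x)" using apex_if_lo_in_gt(3)[OF u xF(1)] by blast
      moreover have "x \<in> F" using Fu_subset_F[OF u] xF(1) by blast
      ultimately show ?thesis using anc_trans[OF wt _ apex_in_V] unfolding Bset_def by blast
    qed (use zF wz in \<open>auto simp: Bset_def\<close>)
  qed
  then have "Pl E u \<subseteq> (\<Union>l\<in>Bset E r F w. Pl E l)"
    using up_link_covered_without_first[OF u c g0 zF zt qz] by blast
  then have "dep w \<le> dep (v_of E r F u)" using dep_le_v_of[OF u wt] by blast
  moreover have "anc (v_of E r F u) (ap g)" using Fu_ok_props(1)[OF u] g unfolding Bset_def by blast
  then have "dep (v_of E r F u) \<le> dep (ap g)" using anc_dep_le apex_in_V Fu_subset_F[OF u] g by blast
  ultimately show ?thesis by simp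
qed

lemma no_arc_head_apex_between_top_and_succ:
  assumes aq: "(u, g, q) \<in> arcs" and g0: "lo_in u g = depth_lo u"
    and wz: "(w, z) \<in> arc_rel" "w \<noteq> g" "z \<noteq> g"
    and tz: "anc (tu u) (ap z)" "tu u \<noteq> ap z" and zq: "anc (ap z) (ap q)"
  shows False
proof -
  have u: "u \<in> Lup" "u \<in> U" using arc_props aq by auto
  interpret ic: interval_cover "depth_lo u" "depth_hi u" "Fu u" "depths u"
    using interval_cover_up_link[OF u(1)] .
  note U = up_link_props[OF u(1)]
  note cq = consec_in_props[OF u(1) arc_props(3)[OF aq]]
  obtain uz where az: "(uz, w, z) \<in> arcs" using wz unfolding arc_rel_def by blast
  have uz: "uz \<in> Lup" "uz \<in> U" using arc_props az by auto
  have qV: "ap q \<in> V" using apex_in_V cq by blast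
  have "{ap z, parent (ap z)} \<in> Pl E uz" using consec_in_props(10)[OF uz(1) arc_props(3)[OF az]] .
  moreover have "{ap z, parent (ap z)} \<in> Pl E u"
    using parent_edge_in_up_link[OF u(1) tz(1) anc_trans[OF zq cq(13) U(4)]] tz(2) by metis
  ultimately have "uz = u" using U_disj uz u by blast
  then have cwz: "consec_in u w z" using arc_props az by blast
  have zFu: "z \<in> Fu u" using consec_in_props(2)[OF u(1) cwz] .
  have "z \<noteq> q"
  proof
    assume "z = q"
    then show False using arcs_same_head(2)[OF _ aq, of uz w] az wz(2) by simp
  qed
  then have "lo_in u q < lo_in u z"
    using ic.lo_succ_less_if_first[OF arc_props(3)[OF aq] g0 zFu wz(3)] by blast
  moreover have "dep (ap z) = lo_in u z - 1"
    using apex_if_lo_in_gt(2)[OF u(1) zFu] consec_in_props(14)[OF u(1) cwz] by blast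
  moreover have "dep (ap q) = lo_in u q - 1" using apex_if_lo_in_gt(2)[OF u(1) cq(2) cq(14)] .
  moreover have "dep (ap z) \<le> dep (ap q)" using anc_dep_le zq qV by blast
  moreover have "depth_lo u < lo_in u q" using cq by blast
  ultimately show False by simp
qed

lemma sibling_descendant_not_covering:
  assumes as: "(us, g, s) \<in> arcs" and aq: "(uq, g, q) \<in> arcs" and sq: "s \<noteq> q"
    and aps: "anc (ap s) (ap q)" "ap s \<noteq> ap q"
    and sz: "(s, z) \<in> arc_rel\<^sup>*" and zq: "anc (ap z) (ap q)" and qz: "ap q \<in> Vl E z"
  shows False
proof -
  have uq: "uq \<in> Lup" using arc_props aq by auto
  note cs = consec_in_props[OF arc_props(2,3)[OF as]]
  note cq = consec_in_props[OF uq arc_props(3)[OF aq]]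
  note U = up_link_props[OF uq]
  let ?t = "tu uq"
  have st: "anc (ap s) ?t" using sibling_apex_anc_top[OF as aq sq aps(1)] .
  have sF: "s \<in> F" using cs by blast
  have zF: "z \<in> F" and asz: "anc (ap s) (ap z)" using arc_rel_rtrancl[OF sz sF] by auto
  have dgs: "dep (ap g) < dep (ap s)" using anc_dep_less cs(6,7) apex_in_V[OF sF] by blast
  have dst: "dep (ap s) \<le> dep ?t" using anc_dep_le st U by blast
  have gV: "ap g \<in> V" using apex_in_V cs(3) by blast
  have "\<not> (anc ?t (ap g) \<and> ?t \<noteq> ap g)"
  proof
    assume "anc ?t (ap g) \<and> ?t \<noteq> ap g"
    then have "dep ?t < dep (ap g)" using anc_dep_less gV by blast
    then show False using dgs dst by simp
  qed
  then have g0: "lo_in uq g = depth_lo uq" using lo_in_eq_depth_lo[OF uq arc_props(3)[OF aq]] by blast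
  show False
  proof (cases "anc (ap z) ?t")
    case True
    show False
      using dep_le_apex_first_if_cover_from_top[OF uq arc_props(3)[OF aq] g0 zF True qz asz st] dgs
      by simp
  next
    case False
    have qV: "ap q \<in> V" using apex_in_V cq(4) by blast
    have zV: "ap z \<in> V" using apex_in_V zF by blast
    have tz: "anc ?t (ap z)" "?t \<noteq> ap z" using anc_linear[OF cq(11) zq qV] False anc_refl zV by metis+
    have "z \<noteq> s" using tz st False by blast
    then have "(s,z) \<in> arc_rel\<^sup>+" using sz by (metis rtranclD)
    then obtain w where sw: "(s,w) \<in> arc_rel\<^sup>*" and wz: "(w,z) \<in> arc_rel" by (meson tranclD2)
    have "w \<noteq> g" "z \<noteq> g" using arc_rel_rtrancl(3)[OF sw sF] arc_rel_rtrancl(3)[OF sz sF] dgs by auto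
    then show False using no_arc_head_apex_between_top_and_succ[OF aq g0 wz _ _ tz zq] by blast
  qed
qed

lemma arc_rel_path_crossing:
  assumes xz: "(x,z) \<in> arc_rel\<^sup>*" and xF: "x \<in> F" and xv: "anc (ap x) v" and vz: "anc v (ap z)" "v \<noteq> ap z"
  shows "\<exists>p q. (x,p) \<in> arc_rel\<^sup>* \<and> (p,q) \<in> arc_rel \<and> (q,z) \<in> arc_rel\<^sup>* \<and> anc (ap p) v \<and> anc v (ap q) \<and> v \<noteq> ap q"
  using xz vz
proof (induction arbitrary: rule: rtrancl_induct)
  case base
  have "ap x \<in> V" using apex_in_V xF by blast
  then show ?case using anc_antisym[OF base(1) xv] base(2) by blast
next
  case (step y z)
  have yF: "y \<in> F" using arc_rel_rtrancl(1)[OF step(1) xF] .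
  note rf = arc_rel_props[OF step(2)]
  have zV: "ap z \<in> V" using apex_in_V rf by blast
  show ?case
  proof (cases "anc v (ap y) \<and> v \<noteq> ap y")
    case True
    then obtain p q where "(x,p) \<in> arc_rel\<^sup>*" "(p,q) \<in> arc_rel" "(q,y) \<in> arc_rel\<^sup>*" "anc (ap p) v" "anc v (ap q)" "v \<noteq> ap q"
      using step.IH by blast
    then show ?thesis using step(2) by (meson rtrancl.rtrancl_into_rtrancl)
  next
    case False
    have "anc (ap y) v"
    proof (cases "anc v (ap y)")
      case True then have "v = ap y" using False by blast
      then show ?thesis using anc_refl apex_in_V yF by simp
    next
      case False then show ?thesis using anc_linear[OF rf(4) step.prems(1) zV] by blast
    qed
    then show ?thesis using step(1,2) step.prems by blast
  qed
qed

lemma arcs_same_tail_apex_distinct: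
  assumes aq: "(uq, p, q) \<in> arcs" and am: "(um, p, m) \<in> arcs" and qm: "q \<noteq> m"
  shows "ap q \<noteq> ap m"
proof
  assume e: "ap q = ap m"
  have "Pl E uq \<inter> Pl E um = {}"
    using U_disj arc_props(1)[OF aq] arc_props(1)[OF am] arcs_same_tail[OF aq am qm] by blast
  moreover have "{ap q, parent (ap q)} \<in> Pl E uq" using consec_in_props(10)[OF arc_props(2,3)[OF aq]] .
  moreover have "{ap m, parent (ap m)} \<in> Pl E um" using consec_in_props(10)[OF arc_props(2,3)[OF am]] .
  ultimately show False using e by auto
qed

lemma crossing_arc_not_reaching_cover:
  assumes pm: "(p, m) \<in> arc_rel" and pq: "(p', q) \<in> arc_rel" and pp: "p' = p \<or> (p', p) \<in> arc_rel\<^sup>+"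
    and apq: "anc (ap p) (ap q)" "ap p \<noteq> ap q"
    and ql: "(q, l') \<in> arc_rel\<^sup>*" and ml: "ap m \<in> Vl E l'" "l' \<noteq> m"
  shows False
proof -
  note pmf = arc_rel_props[OF pm] and pqf = arc_rel_props[OF pq]
  have mV: "ap m \<in> V" using apex_in_V[OF pmf(2)] .
  have qV: "ap q \<in> V" using apex_in_V[OF pqf(2)] .
  have lF: "l' \<in> F" using arc_rel_rtrancl(1)[OF ql pqf(2)] .
  have lm: "anc (ap l') (ap m)" using apex_anc[OF F_link[OF lF] ml(1)] .
  have qm: "anc (ap q) (ap m)" using anc_trans[OF arc_rel_rtrancl(2)[OF ql pqf(2)] lm mV] .
  have dpq: "dep (ap p) < dep (ap q)" using anc_dep_less[OF apq qV] .
  obtain um where am: "(um, p, m) \<in> arcs" using pm unfolding arc_rel_def by blast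
  show False
  proof (cases "p' = p")
    case True
    obtain uq where aq: "(uq, p, q) \<in> arcs" using pq unfolding True arc_rel_def by blast
    have qm': "q \<noteq> m"
    proof
      assume "q = m"
      then have "(m, l') \<in> arc_rel\<^sup>*" using ql by simp
      then have "(m, l') \<in> arc_rel\<^sup>+" using ml(2) rtranclD[of m l' arc_rel] by auto
      then have "dep (ap m) < dep (ap l')" using arc_rel_trancl by blast
      moreover have "dep (ap l') \<le> dep (ap m)" using anc_dep_le lm mV by blast
      ultimately show False by simp
    qed
    have "ap q \<noteq> ap m" using arcs_same_tail_apex_distinct[OF aq am qm'] .
    then show False using sibling_descendant_not_covering[OF aq am qm' qm _ ql lm ml(1)] by blast
  next
    case False
    then have "(p', p) \<in> arc_rel\<^sup>+" using pp by blast
    then obtain s where ps: "(p', s) \<in> arc_rel" "(s, p) \<in> arc_rel\<^sup>*" by (meson tranclD)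
    obtain us where as: "(us, p', s) \<in> arcs" using ps(1) unfolding arc_rel_def by blast
    obtain uq where aq: "(uq, p', q) \<in> arcs" using pq unfolding arc_rel_def by blast
    have sF: "s \<in> F" using arc_rel_props(2)[OF ps(1)] .
    have sp: "anc (ap s) (ap p)" "dep (ap s) \<le> dep (ap p)" using arc_rel_rtrancl(2,3)[OF ps(2) sF] by auto
    have sq: "s \<noteq> q" "ap s \<noteq> ap q" using sp dpq by auto
    have "anc (ap s) (ap q)" using anc_trans[OF sp(1) apq(1) qV] .
    moreover have "ap q \<in> Vl E p"
      using link_convex[OF F_link[OF pmf(1)] apex_min(1)[OF F_link[OF pmf(1)]] pmf(3) apq(1) qm] .
    ultimately show False using sibling_descendant_not_covering[OF as aq sq(1) _ sq(2) ps(2) apq(1)] by blast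
  qed
qed

lemma covering_link_precedes:
  assumes rF: "rt \<in> F" and rm: "(rt, m) \<in> arc_rel\<^sup>*"
    and rl: "(rt, l') \<in> arc_rel\<^sup>*" and ml: "ap m \<in> Vl E l'" "l' \<noteq> m"
  shows "(l', m) \<in> arc_rel\<^sup>+"
  using rm rl ml
proof (induction arbitrary: l' rule: rtrancl_induct)
  case base
  have "(rt, l') \<in> arc_rel\<^sup>+" using rtranclD[OF base(1)] base(3) by auto
  then have "dep (ap rt) < dep (ap l')" using arc_rel_trancl(1) by blast
  moreover have "l' \<in> F" using arc_rel_rtrancl(1)[OF base(1) rF] .
  then have "anc (ap l') (ap rt)" using apex_anc[OF F_link base(2)] by blast
  then have "dep (ap l') \<le> dep (ap rt)" using anc_dep_le[OF apex_in_V[OF rF]] by blast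
  ultimately show ?case by simp
next
  case (step p m)
  note pm = arc_rel_props[OF step(2)]
  have lF: "l' \<in> F" using arc_rel_rtrancl(1)[OF step(4) rF] .
  have ll: "is_link l'" using F_link[OF lF] .
  have mV: "ap m \<in> V" using apex_in_V[OF pm(2)] .
  have lm: "anc (ap l') (ap m)" using apex_anc[OF ll step(5)] .
  show ?case
  proof (cases "anc (ap l') (ap p)")
    case True
    have "ap p \<in> Vl E l'" using link_convex[OF ll apex_min(1)[OF ll] step(5) True pm(4)] .
    then have "l' = p \<or> (l', p) \<in> arc_rel\<^sup>+" using step.IH step(4) by blast
    then show ?thesis using step(2) by (meson trancl.r_into_trancl trancl.trancl_into_trancl)
  next
    case False
    have pl: "anc (ap p) (ap l')" "ap p \<noteq> ap l'"
      using anc_linear[OF lm pm(4) mV] False anc_refl apex_in_V[OF lF] by metis+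
    have rp: "anc (ap rt) (ap p)" using arc_rel_rtrancl(2)[OF step(1) rF] .
    obtain p' q where pq: "(rt,p') \<in> arc_rel\<^sup>*" "(p',q) \<in> arc_rel" "(q,l') \<in> arc_rel\<^sup>*"
        "anc (ap p') (ap p)" "anc (ap p) (ap q)" "ap p \<noteq> ap q"
      using arc_rel_path_crossing[OF step(4) rF rp pl] by blast
    note pqf = arc_rel_props[OF pq(2)]
    have "ap p \<in> Vl E p'"
      using link_convex[OF F_link[OF pqf(1)] apex_min(1)[OF F_link[OF pqf(1)]] pqf(3) pq(4,5)] .
    then have "p' = p \<or> (p', p) \<in> arc_rel\<^sup>+" using step.IH pq(1) by blast
    then show ?thesis using crossing_arc_not_reaching_cover[OF step(2) pq(2) _ pq(5,6) pq(3) step(5,6)]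
      by blast
  qed
qed

lemma dep_apex_less_lo_in:
  assumes u: "u \<in> Lup" and x: "x \<in> Fu u"
  shows "dep (ap x) < lo_in u x"
proof -
  note U = up_link_props[OF u] and lf = lo_in_props[OF u x]
  have "dep (vertex_at (bu u) (lo_in u x - 1)) = lo_in u x - 1"
    using vertex_at_props(2)[OF U(4)] lf(1,2) U(9) by simp
  then show ?thesis
    using anc_dep_le[OF _ lf(5)] vertex_at_props(3)[OF U(4)] lf(1,2) U(9) by fastforce
qed

lemma dep_apex_less_if_lo_in_less:
  assumes u: "u \<in> Lup" and x: "x \<in> Fu u" and y: "y \<in> Fu u" and lt: "lo_in u x < lo_in u y"
  shows "dep (ap x) < dep (ap y)"
proof -
  interpret ic: interval_cover "depth_lo u" "depth_hi u" "Fu u" "depths u"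
    using interval_cover_up_link[OF u] .
  have "depth_lo u < lo_in u y" using ic.D_interval(3)[OF x] lt by simp
  then have "dep (ap y) = lo_in u y - 1" using apex_if_lo_in_gt(2)[OF u y] by blast
  then show ?thesis using dep_apex_less_lo_in[OF u x] lt by simp
qed

lemma Vl_not_below_hi_in:
  assumes u: "u \<in> Lup" and x: "x \<in> Fu u" and d: "Suc (hi_in u x) \<le> dep (bu u)"
    and v: "anc (vertex_at (bu u) (Suc (hi_in u x))) v" "v \<in> Vl E x"
  shows False
proof -
  interpret ic: interval_cover "depth_lo u" "depth_hi u" "Fu u" "depths u"
    using interval_cover_up_link[OF u] .
  note U = up_link_props[OF u]
  let ?b = "bu u" and ?h = "hi_in u x"
  have xl: "is_link x" using F_link Fu_subset_F[OF u] x by blast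
  have hiD: "?h \<in> depths u x" using ic.D_interval[OF x] by auto
  then have hr: "depth_lo u \<le> ?h" "?h \<le> depth_hi u" by (auto simp: depths_def)
  have h2: "2 \<le> ?h" using hr U by simp
  have inh: "vertex_at ?b ?h \<in> Vl E x"
    using hiD edge_at_in_Pl_iff[OF xl U(4) h2] hr U by (simp add: depths_def)
  have "anc (vertex_at ?b ?h) (vertex_at ?b (Suc ?h))" using vertex_at_anc[OF U(4)] d h2 by simp
  then have ind: "vertex_at ?b (Suc ?h) \<in> Vl E x" using link_convex[OF xl inh v(2) _ v(1)] by blast
  have "anc (ap x) (vertex_at ?b ?h)" using apex_anc xl inh by blast
  then have "dep (ap x) \<le> ?h" using anc_dep_le vertex_at_props[OF U(4)] h2 hr U
    by (metis one_le_numeral order_trans)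
  moreover have "dep (vertex_at ?b (Suc ?h)) = Suc ?h" using vertex_at_props[OF U(4)] d by simp
  ultimately have "vertex_at ?b (Suc ?h) \<noteq> ap x" by auto
  then have "edge_at ?b (Suc ?h) \<in> Pl E x" using edge_at_in_Pl_iff[OF xl U(4)] ind d h2 by simp
  then have "Suc ?h \<in> depths u x" using d hr U by (simp add: depths_def)
  then show False using ic.D_interval[OF x] by auto
qed

text \<open>The part of \<open>P\<^sub>u\<close> owned by \<open>y\<^sub>2\<close> starts strictly after the last edge of \<open>x\<^sub>1\<close>, and every
  apex reachable from \<open>y\<^sub>2\<close> lies below that edge, hence outside \<open>V\<^bsub>x\<^sub>1\<^esub>\<close>.\<close>
lemma repeated_up_link_not_covering:
  assumes a1: "(u, x1, y1) \<in> arcs" and a2: "(u, x2, y2) \<in> arcs" and ne: "x1 \<noteq> x2"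
    and yx: "(y1, x2) \<in> arc_rel\<^sup>*" and yl: "(y2, l) \<in> arc_rel\<^sup>*" and lx: "ap l \<in> Vl E x1"
  shows False
proof -
  have u: "u \<in> Lup" using arc_props a1 by blast
  interpret ic: interval_cover "depth_lo u" "depth_hi u" "Fu u" "depths u"
    using interval_cover_up_link[OF u] .
  note U = up_link_props[OF u]
  have c1: "consec_in u x1 y1" and c2: "consec_in u x2 y2" using arc_props a1 a2 by auto
  note f1 = consec_in_props[OF u c1] and f2 = consec_in_props[OF u c2]
  have "dep (ap x1) < dep (ap y1)" using arc_rel_props(6) a1 unfolding arc_rel_def by blast
  moreover have "dep (ap y1) \<le> dep (ap x2)" using arc_rel_rtrancl(3)[OF yx f1(4)] .
  ultimately have "\<not> lo_in u x2 < lo_in u x1"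
    using dep_apex_less_if_lo_in_less[OF u f2(1) f1(1)] by fastforce
  then have "lo_in u x1 < lo_in u x2" using ic.lo_inj[OF f1(1) f2(1) ne] by simp
  then have "before_in u x1 x2" using ic.before_if_lo_less f1 f2 by blast
  moreover have "before_in u x2 y2" using c2 unfolding ic.consec_def by blast
  ultimately have gap: "Suc (hi_in u x1) < lo_in u y2"
    using ic.between_Suc_hi_less_lo[OF f1(1) f2(2) f2(1)] by blast
  have lo2: "lo_in u y2 \<le> dep (bu u)" using lo_in_props(2)[OF u f2(2)] .
  have "anc (vertex_at (bu u) (Suc (hi_in u x1))) (vertex_at (bu u) (lo_in u y2 - 1))"
    using vertex_at_anc[OF U(4)] gap lo2 by simp
  moreover have "ap y2 = vertex_at (bu u) (lo_in u y2 - 1)" using apex_if_lo_in_gt(1)[OF u f2(2) f2(14)] .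
  moreover have "anc (ap y2) (ap l)" "l \<in> F" using arc_rel_rtrancl[OF yl f2(4)] by auto
  ultimately have "anc (vertex_at (bu u) (Suc (hi_in u x1))) (ap l)"
    using anc_trans apex_in_V by metis
  then show False using Vl_not_below_hi_in[OF u f1(1) _ _ lx] gap lo2 by simp
qed

lemma weak_component_rel_eq:
  "{(arc_tail a, arc_head a) | a. a \<in> arcs} \<union> {(arc_head a, arc_tail a) | a. a \<in> arcs}
     = arc_rel \<union> arc_rel\<inverse>"
  unfolding arc_rel_def arc_tail_def arc_head_def by force

lemma component_root_props:
  assumes comp: "weak_component F arcs C" and root: "is_root C (comp_arcs arcs C) rt"
  shows "C \<subseteq> F" "rt \<in> F" "\<And>x. x \<in> C \<Longrightarrow> (rt, x) \<in> arc_rel\<^sup>*"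
proof -
  let ?S = "arc_rel \<union> arc_rel\<inverse>"
  obtain x0 where x0: "x0 \<in> F" "C = {y. (x0, y) \<in> ?S\<^sup>*}"
    using comp unfolding weak_component_def weak_component_rel_eq by blast
  have "y \<in> F" if "(x0, y) \<in> ?S\<^sup>*" for y
    using that by (induction rule: rtrancl_induct) (use x0 arc_rel_props in auto)
  then show CF: "C \<subseteq> F" using x0 by blast
  have rC: "rt \<in> C" using root unfolding is_root_def by blast
  then show "rt \<in> F" using CF by blast
  have x0r: "(x0, rt) \<in> ?S\<^sup>*" using rC x0 by blast
  have src: "(z, rt) \<notin> arc_rel" for z
  proof
    assume zr: "(z, rt) \<in> arc_rel"
    then obtain u where a: "(u, z, rt) \<in> arcs" unfolding arc_rel_def by blast
    have "z \<in> C" using x0 x0r zr by (auto intro: rtrancl_into_rtrancl)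
    then have "(u, z, rt) \<in> comp_arcs arcs C" using a rC unfolding comp_arcs_def arc_tail_def arc_head_def by simp
    then show False using root unfolding is_root_def arc_head_def by fastforce
  qed
  fix x assume "x \<in> C"
  then have "(x0, x) \<in> ?S\<^sup>*" using x0 by blast
  moreover have "(rt, x0) \<in> ?S\<^sup>*" using rtrancl_converseI[OF x0r] by (simp add: converse_Un Un_commute)
  ultimately have "(rt, x) \<in> ?S\<^sup>*" by (meson rtrancl_trans)
  moreover have "\<And>x x' y. (x, y) \<in> arc_rel \<Longrightarrow> (x', y) \<in> arc_rel \<Longrightarrow> x = x'"
    using arc_rel_pred_unique by blast
  ultimately show "(rt, x) \<in> arc_rel\<^sup>*" using rtrancl_from_source_if_preds_unique[OF src] by blast
qed

lemma path_vertex_arc_rel: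
  assumes H: "dir_path (comp_arcs arcs C) rt l H" and k: "k < length H"
  shows "(path_vertex rt H k, path_vertex rt H (Suc k)) \<in> arc_rel"
proof -
  have "H ! k \<in> arcs" using dir_path_nth(1)[OF H k] unfolding comp_arcs_def by blast
  then have "(fst (H ! k), path_vertex rt H k, path_vertex rt H (Suc k)) \<in> arcs"
    using dir_path_nth(2)[OF H k] by simp
  then show ?thesis unfolding arc_rel_def by blast
qed

lemma path_vertex_rtrancl:
  assumes H: "dir_path (comp_arcs arcs C) rt l H" and km: "k \<le> m" "m \<le> length H"
  shows "(path_vertex rt H k, path_vertex rt H m) \<in> arc_rel\<^sup>*"
  using km
proof (induction m)
  case (Suc m)
  then show ?case using path_vertex_arc_rel[OF H, of m] by (cases "k = Suc m") auto
qed simp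

lemma path_vertex_pred:
  assumes H: "dir_path (comp_arcs arcs C) rt l H" and rl: "(rt, l') \<in> arc_rel\<^sup>*"
    and k: "k \<le> length H" and l': "(l', path_vertex rt H k) \<in> arc_rel\<^sup>+"
  shows "\<exists>i<k. path_vertex rt H i = l'"
  using k l'
proof (induction k)
  case 0
  then have "(rt, rt) \<in> arc_rel\<^sup>+" using rl by (simp add: path_vertex_def)
  then show ?case using arc_rel_trancl_neq by blast
next
  case (Suc k)
  obtain w where w: "(l', w) \<in> arc_rel\<^sup>*" "(w, path_vertex rt H (Suc k)) \<in> arc_rel"
    using Suc.prems(2) by (meson tranclD2)
  have wk: "w = path_vertex rt H k"
    using arc_rel_pred_unique[OF w(2) path_vertex_arc_rel[OF H]] Suc.prems(1) by simp
  show ?case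
  proof (cases "l' = w")
    case False
    then have "(l', path_vertex rt H k) \<in> arc_rel\<^sup>+" using w(1) wk by (auto dest: rtranclD)
    then show ?thesis using Suc.IH Suc.prems(1) less_SucI by fastforce
  qed (use wk in auto)
qed

lemma covering_link_on_path:
  assumes comp: "weak_component F arcs C" and root: "is_root C (comp_arcs arcs C) rt"
    and H: "dir_path (comp_arcs arcs C) rt l H" and l: "l \<in> C"
    and l': "l' \<in> C" "l' \<noteq> l" "ap l \<in> Vl E l'"
  shows "\<exists>i<length H. path_vertex rt H i = l'"
proof -
  note cr = component_root_props[OF comp root]
  have "(l', l) \<in> arc_rel\<^sup>+" using covering_link_precedes[OF cr(2) cr(3)[OF l] cr(3)[OF l'(1)]] l' by simp
  then show ?thesis
    using path_vertex_pred[OF H cr(3)[OF l'(1)] order_refl] dir_path_last_vertex[OF H] by simp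
qed

lemma path_up_links_distinct:
  assumes H: "dir_path (comp_arcs arcs C) rt l H" and ij: "i < j" "j < length H"
    and l: "ap l \<in> Vl E (path_vertex rt H i)"
  shows "fst (H ! i) \<noteq> fst (H ! j)"
proof
  assume eq: "fst (H ! i) = fst (H ! j)"
  let ?h = "path_vertex rt H" and ?u = "fst (H ! i)"
  have arc: "(fst (H ! k), ?h k, ?h (Suc k)) \<in> arcs" if "k < length H" for k
    using dir_path_nth[OF H that] unfolding comp_arcs_def by simp
  have "(?u, ?h i, ?h (Suc i)) \<in> arcs" "(?u, ?h j, ?h (Suc j)) \<in> arcs"
    using arc[of i] arc[of j] ij eq by simp_all
  moreover have "?h i \<noteq> ?h j" using dir_path_vertex_inj[OF H, of i j] ij by fastforce
  moreover have "(?h (Suc i), ?h j) \<in> arc_rel\<^sup>*" using path_vertex_rtrancl[OF H] ij by simp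
  moreover have "(?h (Suc j), l) \<in> arc_rel\<^sup>*"
    using path_vertex_rtrancl[OF H, of "Suc j" "length H"] ij dir_path_last_vertex[OF H] by simp
  ultimately show False using repeated_up_link_not_covering l by blast
qed

text \<open>Each counted link \<open>l'\<close> lies on \<open>H\<close> and is charged to the up-link of the arc of \<open>H\<close> leaving it.\<close>
lemma card_covering_links_le:
  assumes comp: "weak_component F arcs C" and l: "l \<in> C"
    and root: "is_root C (comp_arcs arcs C) rt"
    and H: "dir_path (comp_arcs arcs C) rt l H"
  shows "card {l' \<in> C - {l}. ap l \<in> Vl E l'}
           \<le> card {u \<in> U. \<exists>a\<in>set H. a \<in> (\<lambda>(x, y). (u, x, y)) ` A_u E r u (Fu u)}"
proof -
  let ?LHS = "{l' \<in> C - {l}. ap l \<in> Vl E l'}"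
  let ?RHS = "{u \<in> U. \<exists>a\<in>set H. a \<in> (\<lambda>(x, y). (u, x, y)) ` A_u E r u (Fu u)}"
  have "\<forall>l'\<in>?LHS. \<exists>i. i < length H \<and> path_vertex rt H i = l'"
    using covering_link_on_path[OF comp root H l] by blast
  then obtain idx where idx: "\<And>l'. l' \<in> ?LHS \<Longrightarrow> idx l' < length H \<and> path_vertex rt H (idx l') = l'"
    by metis
  let ?f = "\<lambda>l'. fst (H ! idx l')"
  have "inj_on ?f ?LHS"
  proof (rule inj_onI, rule ccontr)
    fix l1 l2 assume l12: "l1 \<in> ?LHS" "l2 \<in> ?LHS" "?f l1 = ?f l2" "l1 \<noteq> l2"
    then have "idx l1 \<noteq> idx l2" using idx by metis
    then consider "idx l1 < idx l2" | "idx l2 < idx l1" by linarith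
    then show False
      using path_up_links_distinct[OF H, of "idx l1" "idx l2"] path_up_links_distinct[OF H, of "idx l2" "idx l1"]
        idx[OF l12(1)] idx[OF l12(2)] l12 by cases auto
  qed
  moreover have "?f ` ?LHS \<subseteq> ?RHS"
  proof
    fix u assume "u \<in> ?f ` ?LHS"
    then obtain k where k: "k < length H" "u = fst (H ! k)" using idx by blast
    have "H ! k \<in> arcs" using dir_path_nth(1)[OF H k(1)] unfolding comp_arcs_def by blast
    then obtain x y where "H ! k = (u, x, y)" "u \<in> U" "(x,y) \<in> A_u E r u (Fu u)"
      using k(2) unfolding dep_arcs_def by auto
    then show "u \<in> ?RHS" using nth_mem[OF k(1)] by force
  qed
  moreover have "finite ?RHS" using finite_U by simp
  ultimately show ?thesis by (rule card_inj_on_le)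
qed

end

theorem lemma13:
  fixes V :: "'v set" and E L F U :: "'v set set" and w :: "'v set \<Rightarrow> real" and r :: 'v
    and Fu :: "'v set \<Rightarrow> 'v set set" and C :: "'v set set" and l :: "'v set"
    and root :: "'v set" and H :: "('v set \<times> 'v set \<times> 'v set) list"
  assumes tree: "is_tree V E"
    and links: "L \<subseteq> {{a, b} | a b. a \<in> V \<and> b \<in> V \<and> a \<noteq> b}"
    and weights: "\<forall>x\<in>L. w x > 0"
    and root_in: "r \<in> V"
    and F_sub: "F \<subseteq> L"
    and F_sol: "(\<Union>x\<in>F. Pl E x) = E"
    and U_sub: "U \<subseteq> L_up E r L"
    and U_disj: "\<forall>u1\<in>U. \<forall>u2\<in>U. u1 \<noteq> u2 \<longrightarrow> Pl E u1 \<inter> Pl E u2 = {}"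
    and Fu_choice: "\<forall>u\<in>L_up E r L. Fu_ok E r F u (Fu u)"
    and comp: "weak_component F (dep_arcs E r Fu U) C"
    and l_in: "l \<in> C"
    and root: "is_root C (comp_arcs (dep_arcs E r Fu U) C) root"
    and H: "dir_path (comp_arcs (dep_arcs E r Fu U) C) root l H"
  shows "card {l' \<in> C - {l}. apex E r l \<in> Vl E l'}
           \<le> card {u \<in> U. \<exists>a\<in>set H. a \<in> (\<lambda>(x, y). (u, x, y)) ` A_u E r u (Fu u)}"
proof -
  interpret dependency_graph V E r L F U Fu
    by (unfold_locales) (use tree root_in links F_sub U_sub U_disj Fu_choice in auto)
  show ?thesis using card_covering_links_le[OF comp l_in root H] .
qed

end
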